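(* Let $w=(w_k)_{k\ge0}$ be a weight sequence with $w_0>0$ and $w_k>0$ for some $k\ge1$. Suppose that $n\to\infty$ and $m=m(n)$ with $m/n\to\lambda$, where $0\le\lambda<\infty$. If $\lambda\le\nu$, then $Y_{(1)}=o_p(n)$, i.e., $Y_{(1)}/n\to0$ in probability.
   Context: A weight sequence is a sequence $w=(w_k)_{k\ge0}$ of nonnegative reals. $\Phi(t)=\sum_kw_kt^k$, $\rho$ its radius of convergence; $\Psi(t)=t\Phi'(t)/\Phi(t)$ for $\Phi(t)<\infty$, $\Psi(\rho)=\lim_{t\uparrow\rho}\Psi(t)$ if $\Phi(\rho)=\infty$; $\nu=\Psi(\rho)$. Balls-in-boxes: $\mathcal B_{m,n}=\{(y_1,\dots,y_n)\in\{0,1,\dots\}^n:\sum y_i=m\}$, weight $w(y)=\prod_iw_{y_i}$, $Z(m,n)=\sum_{y\in\mathcal B_{m,n}}w(y)$; when $Z(m,n)>0$, $B_{m,n}=(Y_1,\dots,Y_n)$ is random with $P(B_{m,n}=y)=w(y)/Z(m,n)$ (only $m,n$ with $Z(m,n)>0$ are considered). $Y_{(1)}=\max_iY_i$. *)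

theory Defs
  imports "HOL-Analysis.Analysis"
begin

definition Phi :: "(nat \<Rightarrow> real) \<Rightarrow> real \<Rightarrow> ennreal" where
  "Phi w t = (\<Sum>k. ennreal (w k * t ^ k))"

text \<open>Psi(t) = t Phi'(t) / Phi(t) = (sum_k k w_k t^k) / Phi(t), valued in [0,\<infinity>].\<close>
definition Psi :: "(nat \<Rightarrow> real) \<Rightarrow> real \<Rightarrow> ennreal" where
  "Psi w t = (\<Sum>k. ennreal (real k * w k * t ^ k)) / Phi w t"

text \<open>rho = radius of convergence of Phi; nu = Psi(rho), where Psi(rho) is the
  left limit of Psi at rho when Phi(rho) = \<infinity> (including the case rho = \<infinity>).\<close>
definition nu :: "(nat \<Rightarrow> real) \<Rightarrow> ennreal" where
  "nu w = (if conv_radius w = \<infinity> then Lim at_top (Psi w)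
           else (let r = real_of_ereal (conv_radius w) in
                 if Phi w r < \<infinity> then Psi w r else Lim (at_left r) (Psi w)))"

definition boxes :: "nat \<Rightarrow> nat \<Rightarrow> (nat \<Rightarrow> nat) set" where
  "boxes m n = {y. (\<forall>i\<ge>n. y i = 0) \<and> (\<Sum>i<n. y i) = m}"

definition wt :: "(nat \<Rightarrow> real) \<Rightarrow> nat \<Rightarrow> (nat \<Rightarrow> nat) \<Rightarrow> real" where
  "wt w n y = (\<Prod>i<n. w (y i))"

definition Z :: "(nat \<Rightarrow> real) \<Rightarrow> nat \<Rightarrow> nat \<Rightarrow> real" where
  "Z w m n = (\<Sum>y\<in>boxes m n. wt w n y)"

definition Pbb :: "(nat \<Rightarrow> real) \<Rightarrow> nat \<Rightarrow> nat \<Rightarrow> ((nat \<Rightarrow> nat) \<Rightarrow> bool) \<Rightarrow> real" where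
  "Pbb w m n P = (\<Sum>y\<in>{y\<in>boxes m n. P y}. wt w n y) / Z w m n"

definition Ymax :: "nat \<Rightarrow> (nat \<Rightarrow> nat) \<Rightarrow> nat" where
  "Ymax n y = (MAX i\<in>{..<n}. y i)"

end

theory Submission
  imports Defs "HOL-Real_Asymp.Real_Asymp"
begin

text \<open>Let \<open>\<Psi>(t)\<close> be the mean of the tilted law \<open>w k t^k / \<Phi>(t)\<close>. The weight of the allocations with
  some box above \<open>\<epsilon> n\<close> is at most \<open>n \<Phi>(u)^(n-1) / u^m\<close> times the tail sum of \<open>w k u^k\<close> over
  \<open>k > \<epsilon> n\<close>, and that tail decays like \<open>(u/s)^(\<epsilon> n)\<close> for any \<open>u < s\<close> inside the disc of
  convergence. For a lower bound on \<open>Z(m,n)\<close>, tilt a finitely supported truncation of \<open>w\<close> so that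
  its mean is close to \<open>\<lambda>\<close>: by the law of large numbers most of its mass on \<open>(1 - \<eta>) n\<close> boxes sits
  on totals near the mean, and the remaining \<open>\<eta> n\<close> boxes absorb the difference to \<open>m\<close> using the
  lattice generated by the support (a Frobenius-type argument), at a cost \<open>exp (- O(\<eta>) n)\<close>.
  The hypothesis \<open>\<lambda> \<le> \<nu>\<close> provides points where \<open>\<Psi>\<close> is at least about \<open>\<lambda>\<close>, at which the two
  bounds compare and the factor \<open>(u/s)^(\<epsilon> n)\<close> wins; if there is no such point, the support of
  \<open>w\<close> lies in \<open>[0, \<lambda>]\<close> and no box can exceed \<open>\<lambda>\<close>.\<close>

section \<open>Partition functions\<close>

definition Zgen :: "(nat \<Rightarrow> nat \<Rightarrow> real) \<Rightarrow> nat \<Rightarrow> nat \<Rightarrow> real" where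
  "Zgen f x N = (\<Sum>y\<in>boxes x N. \<Prod>i<N. f i (y i))"

lemma Z_eq_Zgen: "Z w x N = Zgen (\<lambda>_. w) x N"
  by (simp add: Z_def Zgen_def wt_def)

lemma boxes_0: "boxes x 0 = (if x = 0 then {\<lambda>_. 0} else {})"
  by (auto simp: boxes_def)

lemma boxes_Suc: "boxes x (Suc N) = (\<lambda>(k,y). y(N:=k)) ` (SIGMA k:{..x}. boxes (x-k) N)"
proof (intro equalityI subsetI)
  fix y assume y: "y \<in> boxes x (Suc N)"
  define k where "k = y N"
  define y' where "y' = y(N:=0)"
  have s: "(\<Sum>i<Suc N. y i) = x" using y by (simp add: boxes_def)
  have s2: "(\<Sum>i<N. y' i) = (\<Sum>i<N. y i)" by (intro sum.cong) (auto simp: y'_def)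
  have kx: "k \<le> x" using s by (simp add: k_def)
  have "y' \<in> boxes (x-k) N" using y s s2 by (auto simp: boxes_def y'_def k_def)
  moreover have "y = y'(N:=k)" by (auto simp: y'_def k_def)
  ultimately show "y \<in> (\<lambda>(k,y). y(N:=k)) ` (SIGMA k:{..x}. boxes (x-k) N)"
    using kx by force
next
  fix z assume "z \<in> (\<lambda>(k,y). y(N:=k)) ` (SIGMA k:{..x}. boxes (x-k) N)"
  then obtain k y where k: "k \<le> x" and y: "y \<in> boxes (x-k) N" and z: "z = y(N:=k)" by auto
  have s2: "(\<Sum>i<N. z i) = (\<Sum>i<N. y i)" by (intro sum.cong) (auto simp: z)
  show "z \<in> boxes x (Suc N)" using y k s2 by (auto simp: boxes_def z)
qed

lemma inj_on_boxes_Suc: "inj_on (\<lambda>(k,y). y(N:=k)) (SIGMA k:{..x}. boxes (x-k) N)"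
proof (rule inj_onI, clarsimp)
  fix k y k' y'
  assume y: "y \<in> boxes (x-k) N" and y': "y' \<in> boxes (x-k') N" and e: "y(N := k) = y'(N := k')"
  have "k = k'" using fun_cong[OF e, of N] by simp
  moreover have "y = y'"
  proof
    fix i show "y i = y' i"
      using fun_cong[OF e, of i] y y' by (cases "i = N") (auto simp: boxes_def)
  qed
  ultimately show "k = k' \<and> y = y'" by simp
qed

lemma finite_boxes: "finite (boxes x N)"
proof (induction N arbitrary: x)
  case 0 then show ?case by (simp add: boxes_0)
next
  case (Suc N) then show ?case by (simp add: boxes_Suc)
qed

lemma Zgen_0: "Zgen f x 0 = (if x = 0 then 1 else 0)"
  by (simp add: Zgen_def boxes_0)

lemma Zgen_Suc: "Zgen f x (Suc N) = (\<Sum>k\<le>x. f N k * Zgen f (x-k) N)"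
proof -
  have "Zgen f x (Suc N) = (\<Sum>(k,y)\<in>(SIGMA k:{..x}. boxes (x-k) N). \<Prod>i<Suc N. f i ((y(N:=k)) i))"
  proof -
    have "Zgen f x (Suc N) = sum ((\<lambda>y. \<Prod>i<Suc N. f i (y i)) \<circ> (\<lambda>(k,y). y(N:=k))) (SIGMA k:{..x}. boxes (x-k) N)"
      unfolding Zgen_def boxes_Suc by (rule sum.reindex[OF inj_on_boxes_Suc])
    also have "\<dots> = (\<Sum>(k,y)\<in>(SIGMA k:{..x}. boxes (x-k) N). \<Prod>i<Suc N. f i ((y(N:=k)) i))"
      by (intro sum.cong refl) auto
    finally show ?thesis .
  qed
  also have "\<dots> = (\<Sum>(k,y)\<in>(SIGMA k:{..x}. boxes (x-k) N). f N k * (\<Prod>i<N. f i (y i)))"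
  proof -
    have aux: "(\<Prod>i<Suc N. f i ((y(N := k)) i)) = f N k * (\<Prod>i<N. f i (y i))" for k y
    proof -
      have "(\<Prod>i<N. f i ((y(N := k)) i)) = (\<Prod>i<N. f i (y i))" by (intro prod.cong) auto
      then show ?thesis by (simp add: mult.commute)
    qed
    show ?thesis by (intro sum.cong refl) (auto simp: aux)
  qed
  also have "\<dots> = (\<Sum>k\<le>x. \<Sum>y\<in>boxes (x-k) N. f N k * (\<Prod>i<N. f i (y i)))"
    by (subst sum.Sigma) (auto simp: finite_boxes)
  also have "\<dots> = (\<Sum>k\<le>x. f N k * Zgen f (x-k) N)"
    by (simp add: Zgen_def sum_distrib_left)
  finally show ?thesis .
qed

lemma Zgen_nonneg: "(\<And>i k. f i k \<ge> 0) \<Longrightarrow> Zgen f x N \<ge> 0"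
  unfolding Zgen_def by (intro sum_nonneg prod_nonneg) auto

lemma Z_0: "Z w x 0 = (if x = 0 then 1 else 0)"
  by (simp add: Z_eq_Zgen Zgen_0)

lemma Z_Suc: "Z w x (Suc N) = (\<Sum>k\<le>x. w k * Z w (x-k) N)"
  by (simp add: Z_eq_Zgen Zgen_Suc)

lemma Z_nonneg: "(\<And>k. w k \<ge> 0) \<Longrightarrow> Z w x N \<ge> 0"
  by (simp add: Z_eq_Zgen Zgen_nonneg)

lemma Z_Suc_ge_term: assumes "\<And>k. w k \<ge> 0" "k \<le> x" shows "Z w x (Suc N) \<ge> w k * Z w (x-k) N"
proof -
  have "w k * Z w (x-k) N \<le> (\<Sum>k\<le>x. w k * Z w (x-k) N)"
    by (rule member_le_sum) (use assms Z_nonneg in auto)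
  then show ?thesis by (simp add: Z_Suc)
qed

lemma Z_mono_weight: assumes "\<And>k. 0 \<le> v k" "\<And>k. v k \<le> w k" shows "Z v x N \<le> Z w x N"
  unfolding Z_def wt_def by (intro sum_mono prod_mono) (use assms in auto)

section \<open>Generating functions and exponential tilting\<close>

text \<open>Real-valued versions of \<open>\<Phi>(t)\<close> and \<open>t \<Phi>'(t)\<close>; they are meaningful only where the series
  converge (\<open>suminf\<close> of a divergent series is \<open>0\<close>), so summability is always assumed alongside.\<close>

definition gf :: "(nat \<Rightarrow> real) \<Rightarrow> real \<Rightarrow> real" where
  "gf w t = (\<Sum>k. w k * t ^ k)"
definition gf1 :: "(nat \<Rightarrow> real) \<Rightarrow> real \<Rightarrow> real" where
  "gf1 w t = (\<Sum>k. real k * w k * t ^ k)"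

lemma summable_finite_support: "(\<And>k. k > K \<Longrightarrow> f k = 0) \<Longrightarrow> summable (f :: nat \<Rightarrow> real)"
  by (rule sums_summable[OF sums_finite[of "{..K}"]]) (auto simp: not_le)

lemma suminf_finite_support: "(\<And>k. k > K \<Longrightarrow> f k = 0) \<Longrightarrow> suminf (f :: nat \<Rightarrow> real) = (\<Sum>k\<le>K. f k)"
  by (rule suminf_finite) (auto simp: not_le)

lemma gf_finite_support: "(\<And>k. k > K \<Longrightarrow> v k = 0) \<Longrightarrow> gf v t = (\<Sum>k\<le>K. v k * t ^ k)"
  unfolding gf_def by (rule suminf_finite_support) auto

lemma gf1_finite_support: "(\<And>k. k > K \<Longrightarrow> v k = 0) \<Longrightarrow> gf1 v t = (\<Sum>k\<le>K. real k * v k * t ^ k)"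
  unfolding gf1_def by (rule suminf_finite_support) auto

lemma Z_eq_0_above:
  assumes "\<And>k. k > K \<Longrightarrow> v k = 0" "x > K * N"
  shows "Z v x N = 0"
  using assms(2)
proof (induction N arbitrary: x)
  case 0 then show ?case by (simp add: Z_0)
next
  case (Suc N)
  have "v k * Z v (x - k) N = 0" if "k \<le> x" for k
  proof (cases "k \<le> K")
    case True
    then have "x - k > K * N" using Suc.prems that by (simp add: algebra_simps)
    then show ?thesis using Suc.IH by simp
  next
    case False then show ?thesis using assms(1) by simp
  qed
  then show ?case unfolding Z_Suc by (intro sum.neutral) auto
qed

lemma dvd_if_Z_neq_0:
  assumes "\<And>k. v k \<noteq> 0 \<Longrightarrow> d dvd k" "Z v x N \<noteq> 0"
  shows "d dvd x"
  using assms(2)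
proof (induction N arbitrary: x)
  case 0 then show ?case by (simp add: Z_0 split: if_splits)
next
  case (Suc N)
  then obtain k where k: "k \<le> x" "v k * Z v (x - k) N \<noteq> 0"
    by (auto simp: Z_Suc elim: sum.not_neutral_contains_not_neutral)
  then have "d dvd k" "d dvd (x - k)" using assms(1) Suc.IH by auto
  then have "d dvd (k + (x - k))" by (rule dvd_add)
  then show ?case using k by simp
qed

lemma suminf_Z_power_eq:
  assumes "\<And>k. k > K \<Longrightarrow> v k = 0"
  shows "(\<Sum>x. Z v x N * s ^ x) = gf v s ^ N"
proof (induction N)
  case 0
  have "(\<Sum>x. Z v x 0 * s ^ x) = (\<Sum>x\<le>0. Z v x 0 * s ^ x)"
    by (rule suminf_finite_support) (simp add: Z_0)
  then show ?case by (simp add: Z_0)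
next
  case (Suc N)
  have s1: "summable (\<lambda>k. norm (v k * s ^ k))"
    by (rule summable_finite_support[of K]) (simp add: assms)
  have s2: "summable (\<lambda>k. norm (Z v k N * s ^ k))"
    by (rule summable_finite_support[of "K*N"]) (simp add: Z_eq_0_above[OF assms])
  have "gf v s * (\<Sum>x. Z v x N * s ^ x) = (\<Sum>k. \<Sum>i\<le>k. (v i * s ^ i) * (Z v (k - i) N * s ^ (k - i)))"
    unfolding gf_def by (rule Cauchy_product[OF s1 s2])
  also have "\<dots> = (\<Sum>k. Z v k (Suc N) * s ^ k)"
  proof (intro suminf_cong)
    fix k
    have "(\<Sum>i\<le>k. (v i * s ^ i) * (Z v (k - i) N * s ^ (k - i))) = (\<Sum>i\<le>k. s ^ k * (v i * Z v (k - i) N))"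
    proof (intro sum.cong refl)
      fix i assume "i \<in> {..k}"
      then have "s ^ i * s ^ (k - i) = s ^ k" by (simp flip: power_add)
      then show "(v i * s ^ i) * (Z v (k - i) N * s ^ (k - i)) = s ^ k * (v i * Z v (k - i) N)"
        by (metis (no_types, lifting) mult.commute mult.left_commute)
    qed
    then show "(\<Sum>i\<le>k. (v i * s ^ i) * (Z v (k - i) N * s ^ (k - i))) = Z v k (Suc N) * s ^ k"
      by (simp add: Z_Suc sum_distrib_left mult.commute)
  qed
  finally show ?case using Suc by simp
qed

lemma sum_Z_power_eq:
  assumes "\<And>k. k > K \<Longrightarrow> v k = 0"
  shows "(\<Sum>x\<le>K*N. Z v x N * s ^ x) = gf v s ^ N"
proof -
  have "(\<Sum>x. Z v x N * s ^ x) = (\<Sum>x\<le>K*N. Z v x N * s ^ x)"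
    by (rule suminf_finite_support) (simp add: Z_eq_0_above[OF assms])
  then show ?thesis using suminf_Z_power_eq[OF assms] by simp
qed

lemma jensen_power_series:
  fixes a :: "nat \<Rightarrow> real"
  assumes a0: "\<And>k. a k \<ge> 0" and sa: "summable a" and sb: "summable (\<lambda>k. real k * a k)"
    and sx: "summable (\<lambda>k. a k * x ^ k)" and x: "x > 0" and A: "suminf a > 0"
  shows "(\<Sum>k. a k * x ^ k) \<ge> suminf a * x powr ((\<Sum>k. real k * a k) / suminf a)"
proof -
  define A where "A = suminf a"
  define B where "B = (\<Sum>k. real k * a k)"
  define \<mu> where "\<mu> = B / A"
  define c where "c = x powr \<mu>"
  have c0: "c > 0" using x by (simp add: c_def)
  \<comment> \<open>The tangent line of \<open>exp\<close> at the mean: \<open>x ^ k \<ge> x powr \<mu> * (1 + (k - \<mu>) ln x)\<close>.\<close>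
  have le: "c * a k + (c * ln x) * (real k * a k) - (c * ln x * \<mu>) * a k \<le> a k * x ^ k" for k
  proof -
    have e0: "x ^ k = c * x powr (real k - \<mu>)"
      using x by (simp add: c_def flip: powr_add powr_realpow)
    have e1: "x powr (real k - \<mu>) = exp ((real k - \<mu>) * ln x)"
      using x by (simp add: powr_def mult.commute)
    have e2: "1 + (real k - \<mu>) * ln x \<le> exp ((real k - \<mu>) * ln x)" by (rule exp_ge_add_one_self)
    have "x ^ k \<ge> c * (1 + (real k - \<mu>) * ln x)"
      unfolding e0 e1 using c0 e2 by (intro mult_left_mono) auto
    then have "a k * x ^ k \<ge> a k * (c * (1 + (real k - \<mu>) * ln x))"
      using a0[of k] by (rule mult_left_mono)
    then show ?thesis by (simp add: algebra_simps)
  qed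
  have sums: "(\<lambda>k. c * a k + (c * ln x) * (real k * a k) - (c * ln x * \<mu>) * a k) sums
        (c * A + (c * ln x) * B - (c * ln x * \<mu>) * A)"
    unfolding A_def B_def
    by (intro sums_diff sums_add sums_mult summable_sums sa sb)
  have "c * A + (c * ln x) * B - (c * ln x * \<mu>) * A = c * A"
    using A by (simp add: \<mu>_def A_def)
  then have "c * A \<le> (\<Sum>k. a k * x ^ k)"
    using suminf_le[OF le sums_summable[OF sums] sx] sums_unique[OF sums] by simp
  then show ?thesis by (simp add: c_def \<mu>_def A_def B_def mult.commute)
qed

lemma gf_mult_ge_powr:
  assumes w0: "\<And>k. w k \<ge> 0" and u: "u > 0" and x: "x > 0" and pos: "gf w u > 0"
    and s1: "summable (\<lambda>k. w k * u ^ k)" and s2: "summable (\<lambda>k. real k * w k * u ^ k)"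
    and s3: "summable (\<lambda>k. w k * (u * x) ^ k)"
  shows "gf w (u * x) \<ge> gf w u * x powr (gf1 w u / gf w u)"
proof -
  define a where "a = (\<lambda>k. w k * u ^ k)"
  have "\<And>k. a k \<ge> 0" using w0 u by (simp add: a_def)
  moreover have "summable a" "summable (\<lambda>k. real k * a k)" "summable (\<lambda>k. a k * x ^ k)"
    using s1 s2 s3 by (simp_all add: a_def power_mult_distrib mult.assoc)
  moreover have "suminf a = gf w u" "(\<Sum>k. real k * a k) = gf1 w u" "(\<Sum>k. a k * x ^ k) = gf w (u * x)"
    by (simp_all add: a_def gf_def gf1_def power_mult_distrib mult.assoc)
  ultimately show ?thesis using jensen_power_series[of a x] x pos by simp
qed

locale finite_weight =
  fixes v :: "nat \<Rightarrow> real" and K :: nat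
  assumes v_nonneg: "\<And>k. v k \<ge> 0" and v0: "v 0 > 0" and v_supp: "\<And>k. k > K \<Longrightarrow> v k = 0"
begin

lemma gf_eq: "gf v s = (\<Sum>k\<le>K. v k * s ^ k)"
  by (rule gf_finite_support) (simp add: v_supp)

lemma gf1_eq: "gf1 v s = (\<Sum>k\<le>K. real k * v k * s ^ k)"
  by (rule gf1_finite_support) (simp add: v_supp)

lemma gf_ge_v0: assumes "s \<ge> 0" shows "gf v s \<ge> v 0"
proof -
  have "v 0 * s ^ 0 \<le> (\<Sum>k\<le>K. v k * s ^ k)"
    by (rule member_le_sum) (use assms v_nonneg in auto)
  then show ?thesis by (simp add: gf_eq)
qed

lemma gf_pos: "s \<ge> 0 \<Longrightarrow> gf v s > 0"
  using gf_ge_v0 v0 by fastforce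

lemma gf1_nonneg: assumes "s \<ge> 0" shows "gf1 v s \<ge> 0"
  unfolding gf1_eq using assms v_nonneg by (intro sum_nonneg) auto

lemma isCont_psi: assumes "t > 0" shows "isCont (\<lambda>s. gf1 v s / gf v s) t"
proof -
  have "gf v t \<noteq> 0" using gf_pos[of t] assms by simp
  then show ?thesis unfolding gf1_eq gf_eq by (intro continuous_intros) (simp add: gf_eq)
qed

lemma continuous_on_gf: "continuous_on A (gf v)"
  unfolding gf_eq by (intro continuous_intros)

lemma continuous_on_gf1: "continuous_on A (gf1 v)"
  unfolding gf1_eq by (intro continuous_intros)

lemma gf_mult_ge:
  assumes s: "s > 0" and x: "x > 0"
  shows "gf v (s * x) \<ge> gf v s * x powr (gf1 v s / gf v s)"
  using gf_pos s x v_nonneg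
  by (intro gf_mult_ge_powr) (auto intro: summable_finite_support[of K] simp: v_supp)

text \<open>Chernoff bounds by exponential tilting from \<open>t\<close> to \<open>s\<close>: they are exponentially small against
  \<open>gf v t ^ N\<close> as soon as the tilted mean at \<open>s\<close> lies beyond the threshold \<open>a\<close>.\<close>

lemma gf_tilt_lt:
  assumes s: "s > 0" and t: "t > 0" and a: "(t/s) powr a < (t/s) powr (gf1 v s / gf v s)"
  shows "gf v s * (t/s) powr a < gf v t"
proof -
  have "gf v s * (t/s) powr a < gf v s * (t/s) powr (gf1 v s / gf v s)"
    using a gf_pos s by (intro mult_strict_left_mono) auto
  also have "\<dots> \<le> gf v (s * (t/s))" using gf_mult_ge[OF s, of "t/s"] s t by simp
  finally show ?thesis using s by simp
qed

lemma Z_tail_le: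
  assumes s: "s > 0" and t: "t > 0"
    and S: "S \<subseteq> {..K*N}" "\<And>x. x \<in> S \<Longrightarrow> (t/s) powr real x \<le> (t/s) powr (a * real N)"
  shows "(\<Sum>x\<in>S. Z v x N * t ^ x) \<le> (gf v s * (t/s) powr a) ^ N"
proof -
  have "(\<Sum>x\<in>S. Z v x N * t ^ x) \<le> (\<Sum>x\<in>S. Z v x N * s ^ x * (t/s) powr (a * real N))"
  proof (intro sum_mono)
    fix x assume "x \<in> S"
    have "t ^ x = s ^ x * (t/s) powr real x"
      using s t by (simp add: powr_realpow power_divide)
    also have "\<dots> \<le> s ^ x * (t/s) powr (a * real N)"
      using S(2)[OF \<open>x \<in> S\<close>] s by (intro mult_left_mono) auto
    finally show "Z v x N * t ^ x \<le> Z v x N * s ^ x * (t/s) powr (a * real N)"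
      using Z_nonneg[of v x N] v_nonneg by (simp add: mult.assoc mult_left_mono)
  qed
  also have "\<dots> \<le> (\<Sum>x\<le>K*N. Z v x N * s ^ x * (t/s) powr (a * real N))"
    using S(1) Z_nonneg[of v] v_nonneg s by (intro sum_mono2) auto
  also have "\<dots> = gf v s ^ N * ((t/s) powr a) powr real N"
    by (simp add: sum_distrib_right[symmetric] sum_Z_power_eq v_supp powr_powr)
  also have "\<dots> = (gf v s * (t/s) powr a) ^ N"
    using s t by (simp add: powr_realpow power_mult_distrib)
  finally show ?thesis .
qed

lemma Z_tail_eventually_small:
  assumes s: "s > 0" and t: "t > 0" and a: "(t/s) powr a < (t/s) powr (gf1 v s / gf v s)"
    and S: "\<And>N. S N \<subseteq> {..K*N}" "\<And>N x. x \<in> S N \<Longrightarrow> (t/s) powr real x \<le> (t/s) powr (a * real N)"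
  shows "\<forall>\<^sub>F N in sequentially. (\<Sum>x\<in>S N. Z v x N * t ^ x) \<le> gf v t ^ N / 4"
proof -
  define \<theta> where "\<theta> = gf v s * (t/s) powr a / gf v t"
  have G: "gf v t > 0" using gf_pos t by simp
  have "0 \<le> \<theta>" using gf_pos[of s] s G by (simp add: \<theta>_def)
  moreover have "\<theta> < 1" using gf_tilt_lt[OF s t a] G by (simp add: \<theta>_def)
  ultimately have "\<forall>\<^sub>F N in sequentially. \<theta> ^ N < 1/4"
    by (intro order_tendstoD(2)[OF LIMSEQ_power_zero]) auto
  then show ?thesis
  proof (rule eventually_mono)
    fix N assume N: "\<theta> ^ N < 1/4"
    have "(\<Sum>x\<in>S N. Z v x N * t ^ x) \<le> (gf v t * \<theta>) ^ N"
      using Z_tail_le[OF s t S] G by (simp add: \<theta>_def)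
    also have "\<dots> \<le> gf v t ^ N / 4" using N G by (simp add: power_mult_distrib)
    finally show "(\<Sum>x\<in>S N. Z v x N * t ^ x) \<le> gf v t ^ N / 4" .
  qed
qed

text \<open>Law of large numbers for the tilted allocation, from the Chernoff bounds on both sides.\<close>

lemma Z_mass_near_mean:
  assumes t: "t > 0" and g: "\<gamma> > 0"
  shows "\<forall>\<^sub>F N in sequentially. gf v t ^ N / 2 \<le>
     (\<Sum>x\<in>{x\<in>{..K*N}. \<bar>real x - (gf1 v t / gf v t) * real N\<bar> \<le> \<gamma> * real N}. Z v x N * t ^ x)"
proof -
  define \<Psi> where "\<Psi> s = gf1 v s / gf v s" for s
  define \<mu> where "\<mu> = \<Psi> t"
  obtain d where d: "d > 0" "\<And>s. s \<noteq> t \<Longrightarrow> norm (s - t) < d \<Longrightarrow> norm (\<Psi> s - \<Psi> t) < \<gamma>"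
    using LIM_D[OF isContD[OF isCont_psi[OF t]] g] unfolding \<Psi>_def by blast
  define s where "s = t + d / 2"
  define s' where "s' = t - min (d/2) (t/2)"
  have s: "s > t" "\<Psi> s < \<mu> + \<gamma>" using d(1) d(2)[of s] by (auto simp: s_def \<mu>_def)
  have m: "0 < min (d/2) (t/2)" "min (d/2) (t/2) < d" using d(1) t by auto
  then have s': "0 < s'" "s' < t" "\<Psi> s' > \<mu> - \<gamma>"
    using d(2)[of s'] m t by (auto simp: s'_def \<mu>_def abs_less_iff)
  define W where "W N = {x\<in>{..K*N}. \<bar>real x - \<mu> * real N\<bar> \<le> \<gamma> * real N}" for N
  define U where "U N = {x\<in>{..K*N}. real x > (\<mu> + \<gamma>) * real N}" for N
  define L where "L N = {x\<in>{..K*N}. real x < (\<mu> - \<gamma>) * real N}" for N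
  have "\<forall>\<^sub>F N in sequentially. (\<Sum>x\<in>U N. Z v x N * t ^ x) \<le> gf v t ^ N / 4"
    using s t by (intro Z_tail_eventually_small[of s])
      (auto simp: U_def \<Psi>_def intro!: powr_less_mono' powr_mono' simp: divide_le_eq less_imp_le)
  moreover have "\<forall>\<^sub>F N in sequentially. (\<Sum>x\<in>L N. Z v x N * t ^ x) \<le> gf v t ^ N / 4"
    using s' t by (intro Z_tail_eventually_small[of s'])
      (auto simp: L_def \<Psi>_def intro!: powr_less_mono powr_mono simp: le_divide_eq less_imp_le)
  ultimately show ?thesis
  proof (rule eventually_mono[OF eventually_conj], elim conjE)
    fix N
    assume "(\<Sum>x\<in>U N. Z v x N * t ^ x) \<le> gf v t ^ N / 4" "(\<Sum>x\<in>L N. Z v x N * t ^ x) \<le> gf v t ^ N / 4"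
    moreover have "{..K*N} = (W N \<union> U N) \<union> L N"
      by (auto simp: W_def U_def L_def abs_le_iff algebra_simps)
    moreover have "W N \<inter> U N = {}" "(W N \<union> U N) \<inter> L N = {}"
    proof -
      have "0 \<le> \<gamma> * real N" using g by simp
      then show "W N \<inter> U N = {}" "(W N \<union> U N) \<inter> L N = {}"
        by (auto simp: W_def U_def L_def abs_le_iff algebra_simps)
    qed
    moreover have "finite (W N)" "finite (U N)" "finite (L N)"
      by (simp_all add: W_def U_def L_def)
    ultimately have "(\<Sum>x\<le>K*N. Z v x N * t ^ x) \<le> (\<Sum>x\<in>W N. Z v x N * t ^ x) + gf v t ^ N / 2"
      by (simp add: sum.union_disjoint)
    then show "gf v t ^ N / 2 \<le> (\<Sum>x\<in>{x\<in>{..K*N}. \<bar>real x - (gf1 v t / gf v t) * real N\<bar> \<le> \<gamma> * real N}. Z v x N * t ^ x)"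
      using sum_Z_power_eq[of K v N t] v_supp by (simp add: W_def \<mu>_def \<Psi>_def)
  qed
qed

end

section \<open>Filling boxes with prescribed values\<close>

inductive fill :: "nat set \<Rightarrow> nat \<Rightarrow> nat \<Rightarrow> bool" for A where
  fill_none: "fill A 0 0"
| fill_empty_box: "fill A j x \<Longrightarrow> fill A (Suc j) x"
| fill_box: "fill A j x \<Longrightarrow> a \<in> A \<Longrightarrow> fill A (Suc j) (x + a)"

lemma fill_add: "fill A j' x' \<Longrightarrow> fill A j x \<Longrightarrow> fill A (j + j') (x + x')"
proof (induction rule: fill.induct)
  case fill_none then show ?case by simp
next
  case (fill_empty_box j' x') then show ?case by (simp add: fill.fill_empty_box)
next
  case (fill_box j' x' a) then show ?case using fill.fill_box[of A "j + j'" "x + x'" a] by (simp add: add.assoc)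
qed

lemma fill_mult: "fill A j x \<Longrightarrow> fill A (k * j) (k * x)"
proof (induction k)
  case 0 then show ?case by (simp add: fill_none)
next
  case (Suc k) then show ?case using fill_add[of A j x "k*j" "k*x"] by (simp add: add.commute)
qed

lemma fill_zeros: "fill A j 0"
  by (induction j) (auto intro: fill.intros)

lemma fill_mono: "fill A j x \<Longrightarrow> j \<le> j' \<Longrightarrow> fill A j' x"
  using fill_add[OF fill_zeros[of A "j' - j"], of j x] by simp

lemma fill_single: "a \<in> A \<Longrightarrow> fill A 1 a"
  using fill_box[OF fill_none, of a A] by simp

lemma fill_dvd: "fill A j x \<Longrightarrow> (\<And>a. a \<in> A \<Longrightarrow> d dvd a) \<Longrightarrow> d dvd x"
  by (induction rule: fill.induct) auto

lemma fill_subset: "fill A j x \<Longrightarrow> A \<subseteq> B \<Longrightarrow> fill B j x"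
  by (induction rule: fill.induct) (auto intro: fill.intros)

lemma fill_bezout:
  assumes "finite F" "F \<noteq> {}" "0 \<notin> F"
  shows "\<exists>P Q j1 j2. fill F j1 P \<and> fill F j2 Q \<and> P = Q + Gcd F"
  using assms
proof (induction F rule: finite_ne_induct)
  case (singleton a)
  have "fill {a} 1 a" by (rule fill_single) simp
  moreover have "fill {a} 0 0" by (rule fill_none)
  ultimately show ?case by fastforce
next
  case (insert a F)
  then obtain P Q j1 j2 where IH: "fill F j1 P" "fill F j2 Q" "P = Q + Gcd F" by auto
  have a0: "a \<noteq> 0" using insert by auto
  obtain x y where xy: "a * x = Gcd F * y + gcd a (Gcd F)" using bezout_nat[OF a0] by blast
  have sub: "F \<subseteq> insert a F" by auto
  have r1: "fill (insert a F) (x * 1 + y * j2) (x * a + y * Q)"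
    by (rule fill_add[OF fill_mult[OF fill_subset[OF IH(2) sub]] fill_mult[OF fill_single]]) simp
  have r2: "fill (insert a F) (y * j1) (y * P)"
    by (rule fill_mult[OF fill_subset[OF IH(1) sub]])
  have "x * a + y * Q = y * P + gcd a (Gcd F)"
    using xy IH(3) by (simp add: algebra_simps)
  then show ?case using r1 r2 by (auto simp: Gcd_insert)
qed

lemma fill_large_multiples:
  assumes r1: "fill A j1 P" and r2: "fill A j2 Q" and PQ: "P = Q + d" and d: "d > 0"
    and dv: "\<And>a. a \<in> A \<Longrightarrow> d dvd a"
  shows "\<exists>N0. \<forall>x\<ge>N0. d dvd x \<longrightarrow> (\<exists>j. fill A j x)"
proof -
  obtain q where q: "Q = d * q" using fill_dvd[OF r2 dv] by (auto elim: dvdE)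
  show ?thesis
  proof (rule exI[of _ "q * q * d"], intro allI impI)
    fix x assume x: "q * q * d \<le> x" "d dvd x"
    then obtain k where k: "x = d * k" by (auto elim: dvdE)
    show "\<exists>j. fill A j x"
    proof (cases "q = 0")
      case True
      then have "P = d" using PQ q by simp
      then show ?thesis using fill_mult[OF r1, of k] k by (auto simp: mult.commute)
    next
      case False
      define a where "a = k div q"
      define b where "b = k mod q"
      have kab: "k = a * q + b" by (simp add: a_def b_def)
      have bq: "b < q" using False by (simp add: b_def)
      have "q * q \<le> k" using x k d by (simp add: mult.commute)
      then have "q * q div q \<le> k div q" by (rule div_le_mono)
      then have "q \<le> a" using False unfolding a_def by simp
      then have ab: "b \<le> a" using bq by simp
      have "x = (a - b) * Q + b * P"
      proof -
        have h1: "x = a * Q + b * d" using k kab q by (simp add: algebra_simps)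
        have h2: "a * Q = (a - b) * Q + b * Q" using ab by (simp add: add_mult_distrib[symmetric])
        show ?thesis using h1 h2 PQ by (simp add: algebra_simps)
      qed
      then show ?thesis using fill_add[OF fill_mult[OF r1, of b] fill_mult[OF r2, of "a - b"]] by blast
    qed
  qed
qed

lemma fill_uniform:
  assumes N0: "\<And>x. x \<ge> N0 \<Longrightarrow> d dvd x \<Longrightarrow> \<exists>j. fill A j x"
    and M: "M \<in> A" "d dvd M" "M > 0"
  shows "\<exists>C. \<forall>X j. N0 \<le> X \<longrightarrow> d dvd X \<longrightarrow> X + C * M \<le> j * M \<longrightarrow> fill A j X"
proof -
  \<comment> \<open>Reduce \<open>X\<close> modulo \<open>M\<close> into the window \<open>[N0, N0 + M)\<close> and add copies of \<open>M\<close>.\<close>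
  define R where "R = {s. N0 \<le> s \<and> s < N0 + M \<and> d dvd s}"
  define J where "J s = (SOME j. fill A j s)" for s
  have fR: "finite R" unfolding R_def by (rule finite_subset[of _ "{..<N0+M}"]) auto
  have J: "fill A (J s) s" if "s \<in> R" for s
    using N0[of s] that unfolding R_def J_def by (auto intro: someI_ex)
  define C where "C = Max (insert 0 (J ` R))"
  have JC: "J s \<le> C" if "s \<in> R" for s unfolding C_def using fR that by (intro Max_ge) auto
  show ?thesis
  proof (intro exI[of _ C] allI impI)
    fix X j assume X: "N0 \<le> X" "d dvd X" "X + C * M \<le> j * M"
    define q where "q = (X - N0) div M"
    define s where "s = X - q * M"
    have qM: "q * M \<le> X - N0" unfolding q_def by (rule div_times_less_eq_dividend)
    have e: "X - N0 = q * M + (X - N0) mod M" unfolding q_def by simp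
    have "(X - N0) mod M < M" using M(3) by simp
    then have lt: "X - N0 < q * M + M" using e by linarith
    have s1: "N0 \<le> s" using qM X(1) unfolding s_def by linarith
    have s2: "s < N0 + M" using lt qM X(1) unfolding s_def by linarith
    have "d dvd q * M" using M(2) by (rule dvd_mult)
    then have s3: "d dvd s" unfolding s_def using X(2) by (rule dvd_diff_nat[rotated])
    have sR: "s \<in> R" using s1 s2 s3 unfolding R_def by simp
    have "fill A (q * 1 + J s) (q * M + s)"
      using fill_add[OF J[OF sR] fill_mult[OF fill_single[OF M(1)], of q]] by (simp add: add.commute)
    moreover have "q * M + s = X" using qM X unfolding s_def by simp
    moreover have "q * 1 + J s \<le> j"
    proof -
      have "(q + J s) * M \<le> q * M + C * M" using JC[OF sR] by (simp add: add_mult_distrib)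
      also have "\<dots> \<le> X + C * M" using qM by simp
      also have "\<dots> \<le> j * M" by fact
      finally show ?thesis using M(3) by simp
    qed
    ultimately show "fill A j X" using fill_mono by auto
  qed
qed

lemma finite_subset_Gcd_dvd:
  fixes S :: "nat set"
  assumes "s0 \<in> S" "0 \<notin> S"
  obtains F where "finite F" "F \<noteq> {}" "F \<subseteq> S" "\<And>s. s \<in> S \<Longrightarrow> Gcd F dvd s"
proof -
  define Pr where "Pr F \<longleftrightarrow> finite F \<and> F \<noteq> {} \<and> F \<subseteq> S" for F :: "nat set"
  have "Pr {s0}" using assms by (simp add: Pr_def)
  from ex_has_least_nat[of Pr "{s0}" Gcd, OF this]
  obtain F where F: "Pr F" and Fmin: "\<And>F'. Pr F' \<Longrightarrow> Gcd F \<le> Gcd F'" by blast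
  have "\<not> F \<subseteq> {0}" using F assms(2) by (auto simp: Pr_def)
  then have d0: "Gcd F > 0" by (metis Gcd_0_iff gr0I)
  have "Gcd F dvd s" if s: "s \<in> S" for s
  proof -
    have "Gcd F \<le> gcd s (Gcd F)" using Fmin[of "insert s F"] F s by (auto simp: Pr_def)
    moreover have "gcd s (Gcd F) \<le> Gcd F" using d0 by (intro dvd_imp_le) auto
    ultimately have "gcd s (Gcd F) = Gcd F" by simp
    then show ?thesis by (metis gcd_dvd1)
  qed
  with F show ?thesis using that by (auto simp: Pr_def)
qed

lemma Z_fill_ge:
  assumes w0: "\<And>k. w k \<ge> 0" and c: "c \<ge> 0" "w 0 \<ge> c" "\<And>a. a \<in> A \<Longrightarrow> w a \<ge> c"
    and r: "fill A j X"
  shows "Z w (x + X) (n1 + j) \<ge> c ^ j * Z w x n1"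
  using r
proof (induction rule: fill.induct)
  case fill_none then show ?case by simp
next
  case (fill_empty_box j X)
  have "c * (c ^ j * Z w x n1) \<le> w 0 * Z w (x + X) (n1 + j)"
    using fill_empty_box c Z_nonneg[of w] w0 by (intro mult_mono) auto
  also have "\<dots> \<le> Z w (x + X) (Suc (n1 + j))"
    using Z_Suc_ge_term[OF w0, where k=0 and x="x + X" and N="n1 + j"] by simp
  finally show ?case by (simp add: mult.assoc)
next
  case (fill_box j X a)
  have "c * (c ^ j * Z w x n1) \<le> w a * Z w (x + X) (n1 + j)"
    using fill_box c Z_nonneg[of w] w0 by (intro mult_mono) auto
  also have "\<dots> \<le> Z w (x + (X + a)) (Suc (n1 + j))"
    using Z_Suc_ge_term[OF w0, where k=a and x="x + (X + a)" and N="n1 + j"] by (simp add: add.assoc[symmetric])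
  finally show ?case by (simp add: mult.assoc)
qed

section \<open>Lower bound for the partition function\<close>

lemma exists_ge_average:
  fixes f :: "'a \<Rightarrow> real"
  assumes "finite W" "real (card W) \<le> c" "sum f W \<ge> S" "S > 0"
  shows "\<exists>x\<in>W. f x \<ge> S / c"
proof (rule ccontr)
  assume "\<not> ?thesis"
  then have lt: "\<And>x. x \<in> W \<Longrightarrow> f x < S / c" by auto
  have "W \<noteq> {}" using assms by auto
  have c0: "c > 0"
  proof -
    have "card W > 0" using \<open>W \<noteq> {}\<close> assms(1) by (simp add: card_gt_0_iff)
    then show ?thesis using assms(2) by linarith
  qed
  have "sum f W < (\<Sum>x\<in>W. S / c)" using lt assms(1) \<open>W \<noteq> {}\<close> by (intro sum_strict_mono) auto
  also have "\<dots> = real (card W) * (S / c)" by simp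
  also have "\<dots> \<le> c * (S / c)"
    using c0 assms by (intro mult_right_mono) auto
  also have "\<dots> = S" using c0 by simp
  finally show False using assms by simp
qed

lemma power_ge_exp_abs_ln: assumes "p > 0" shows "p ^ n \<ge> exp (- (real n * \<bar>ln p\<bar>))"
proof -
  have "p ^ n = exp (real n * ln p)" using assms by (simp add: exp_of_nat_mult)
  moreover have "real n * (- \<bar>ln p\<bar>) \<le> real n * ln p"
  proof -
    have "- \<bar>ln p\<bar> \<le> ln p" using abs_ge_minus_self[of "ln p"] by linarith
    then show ?thesis by (rule mult_left_mono) simp
  qed
  ultimately show ?thesis by simp
qed

lemma power_le_exp_abs_ln: assumes "p > 0" shows "p ^ n \<le> exp (real n * \<bar>ln p\<bar>)"
proof -
  have "p ^ n = exp (real n * ln p)" using assms by (simp add: exp_of_nat_mult)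
  moreover have "real n * ln p \<le> real n * \<bar>ln p\<bar>" by (intro mult_left_mono) auto
  ultimately show ?thesis by simp
qed

lemma power_diff_ge_exp_abs_ln:
  assumes P: "P > 0" and J: "J \<le> n"
  shows "P ^ (n - J) \<ge> P ^ n * exp (- (real J * \<bar>ln P\<bar>))"
proof -
  have "P ^ J * exp (- (real J * \<bar>ln P\<bar>)) \<le> exp (real J * \<bar>ln P\<bar>) * exp (- (real J * \<bar>ln P\<bar>))"
    using power_le_exp_abs_ln[OF P, of J] by (intro mult_right_mono) auto
  also have "\<dots> = 1" by (simp flip: exp_add)
  finally have "P ^ (n - J) * (P ^ J * exp (- (real J * \<bar>ln P\<bar>))) \<le> P ^ (n - J)"
    using P mult_left_mono[of _ 1 "P ^ (n - J)"] by simp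
  moreover have "P ^ n = P ^ (n - J) * P ^ J" using J by (simp flip: power_add)
  ultimately show ?thesis by (simp add: mult.assoc)
qed

lemma fill_gap_bounds:
  fixes m x n J \<mu> lam \<gamma> \<eta> M N0 CM :: real
  assumes m: "\<bar>m - lam * n\<bar> < \<gamma> * n" and x: "\<bar>x - \<mu> * (n - J)\<bar> \<le> \<gamma> * (n - J)"
    and J: "\<eta> * n - 1 < J" "0 \<le> J" "J \<le> n" and \<gamma>: "\<gamma> \<ge> 0" and \<mu>: "\<mu> \<ge> 0" and \<eta>: "\<eta> > 0"
    and lo: "8 * \<gamma> \<le> \<eta> * \<mu> - \<bar>lam - \<mu>\<bar>" and hi: "8 * \<gamma> \<le> \<eta> * (M - \<mu>) - \<bar>lam - \<mu>\<bar>"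
    and large: "N0 + \<mu> \<le> 6 * \<gamma> * n" "CM + M \<le> 6 * \<gamma> * n"
  shows "N0 \<le> m - x" "m - x + CM \<le> J * M"
proof -
  have "0 \<le> \<eta> * (M - \<mu>)" using hi \<gamma> by linarith
  then have M: "\<mu> \<le> M" using \<eta> by (simp add: zero_le_mult_iff)
  have n: "0 \<le> n" using J by linarith
  have "\<mu> * (\<eta> * n - 1) \<le> \<mu> * J" "(M - \<mu>) * (\<eta> * n - 1) \<le> (M - \<mu>) * J"
    using J \<mu> M by (intro mult_left_mono; simp)+
  then have JM: "\<eta> * \<mu> * n - \<mu> \<le> \<mu> * J" "\<eta> * (M - \<mu>) * n - (M - \<mu>) \<le> J * M - \<mu> * J"
    by (simp_all add: algebra_simps)
  have "\<bar>(lam - \<mu>) * n\<bar> \<le> \<bar>lam - \<mu>\<bar> * n" using n by (simp add: abs_mult)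
  then have A: "lam * n - \<mu> * n \<le> \<bar>lam - \<mu>\<bar> * n" "- (\<bar>lam - \<mu>\<bar> * n) \<le> lam * n - \<mu> * n"
    by (simp_all add: abs_le_iff algebra_simps)
  have "8 * \<gamma> * n \<le> (\<eta> * \<mu> - \<bar>lam - \<mu>\<bar>) * n" "8 * \<gamma> * n \<le> (\<eta> * (M - \<mu>) - \<bar>lam - \<mu>\<bar>) * n"
    using lo hi n by (intro mult_right_mono; simp)+
  then have G: "8 * (\<gamma> * n) \<le> \<eta> * \<mu> * n - \<bar>lam - \<mu>\<bar> * n"
      "8 * (\<gamma> * n) \<le> \<eta> * (M - \<mu>) * n - \<bar>lam - \<mu>\<bar> * n"
    by (simp_all add: algebra_simps)
  have X: "x \<le> \<mu> * n - \<mu> * J + (\<gamma> * n - \<gamma> * J)" "\<mu> * n - \<mu> * J - (\<gamma> * n - \<gamma> * J) \<le> x"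
    using x by (simp_all add: abs_le_iff right_diff_distrib)
  have "0 \<le> \<gamma> * J" using \<gamma> J by simp
  moreover have "\<bar>m - lam * n\<bar> < \<gamma> * n" "N0 + \<mu> \<le> 6 * (\<gamma> * n)" "CM + M \<le> 6 * (\<gamma> * n)"
    using m large by simp_all
  ultimately show "N0 \<le> m - x" "m - x + CM \<le> J * M"
    using JM A G X \<mu> unfolding abs_less_iff by linarith+
qed

lemma exp_loss_le:
  fixes P Lc \<eta> \<delta> D Z Z' :: real
  assumes P: "P > 0" and J: "J \<le> n" "real J \<le> \<eta> * real n" and Lc: "Lc \<ge> 0"
    and D: "0 < D" "D \<le> exp (\<delta> * real n)"
    and Z: "P ^ (n - J) / D \<le> Z" and Z': "exp (- (real J * Lc)) * Z \<le> Z'"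
  shows "P ^ n * exp (- ((\<eta> * (Lc + \<bar>ln P\<bar>) + \<delta>) * real n)) \<le> Z'"
proof -
  define eC where "eC = exp (- (real J * Lc))"
  define eP where "eP = exp (- (real J * \<bar>ln P\<bar>))"
  have "real J * (Lc + \<bar>ln P\<bar>) \<le> \<eta> * real n * (Lc + \<bar>ln P\<bar>)" using J Lc by (intro mult_right_mono) auto
  then have "exp (- ((\<eta> * (Lc + \<bar>ln P\<bar>) + \<delta>) * real n)) \<le> eC * eP * exp (- (\<delta> * real n))"
    by (simp add: eC_def eP_def algebra_simps flip: exp_add)
  also have "\<dots> \<le> eC * eP * (1 / D)"
    using D by (intro mult_left_mono) (auto simp: exp_minus field_simps eC_def eP_def)
  finally have "P ^ n * exp (- ((\<eta> * (Lc + \<bar>ln P\<bar>) + \<delta>) * real n)) \<le> P ^ n * (eC * eP * (1 / D))"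
    using P by (intro mult_left_mono) auto
  also have "\<dots> = eC * (P ^ n * eP) / D" by simp
  also have "\<dots> \<le> eC * P ^ (n - J) / D"
    using power_diff_ge_exp_abs_ln[OF P J(1)] D by (intro divide_right_mono mult_left_mono) (auto simp: eC_def eP_def)
  also have "\<dots> \<le> eC * Z" using Z by (simp add: eC_def mult_left_mono times_divide_eq_right[symmetric] del: times_divide_eq_right)
  finally show ?thesis using Z' by (simp add: eC_def)
qed

lemma linear_le_exp_eventually:
  fixes \<delta> :: real and K :: nat assumes "\<delta> > 0"
  shows "\<forall>\<^sub>F x in at_top. 2 * (real K * x + 1) \<le> exp (\<delta> * x)"
  using assms by real_asymp

context finite_weight
begin

lemma exists_typical_total:
  assumes t: "t > 0" and g: "\<gamma> > 0"
  shows "\<forall>\<^sub>F N in sequentially. \<exists>x. \<bar>real x - (gf1 v t / gf v t) * real N\<bar> \<le> \<gamma> * real N \<and>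
           gf v t ^ N / (2 * (real K * real N + 1)) \<le> Z v x N * t ^ x"
  using Z_mass_near_mean[OF t g]
proof (rule eventually_mono)
  fix N
  define W where "W = {x\<in>{..K*N}. \<bar>real x - (gf1 v t / gf v t) * real N\<bar> \<le> \<gamma> * real N}"
  assume mass: "gf v t ^ N / 2 \<le> (\<Sum>x\<in>W. Z v x N * t ^ x)"
  have "real (card W) \<le> real (card {..K*N})" by (intro of_nat_mono card_mono) (auto simp: W_def)
  then have "real (card W) \<le> real K * real N + 1" by simp
  moreover have "gf v t ^ N / 2 > 0" using gf_pos t by simp
  moreover have "finite W" by (simp add: W_def)
  ultimately obtain x where "x \<in> W" "(gf v t ^ N / 2) / (real K * real N + 1) \<le> Z v x N * t ^ x"
    using exists_ge_average mass by blast
  then show "\<exists>x. \<bar>real x - (gf1 v t / gf v t) * real N\<bar> \<le> \<gamma> * real N \<and>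
           gf v t ^ N / (2 * (real K * real N + 1)) \<le> Z v x N * t ^ x"
    by (auto simp: W_def mult.commute)
qed

lemma Z_extend_ge:
  fixes w :: "nat \<Rightarrow> real"
  assumes w0: "\<And>k. w k \<ge> 0" and vw: "\<And>k. v k \<le> w k"
    and c: "c > 0" "c \<le> w 0" "\<And>a. a \<in> A \<Longrightarrow> c \<le> w a" and t: "t > 0"
    and fill: "fill A J X" and XM: "real X \<le> real J * M"
  shows "Z w (x + X) (n1 + J) * t ^ (x + X) \<ge> exp (- (real J * (\<bar>ln c\<bar> + M * \<bar>ln t\<bar>))) * (Z v x n1 * t ^ x)"
proof -
  have "c ^ J * Z v x n1 \<le> c ^ J * Z w x n1"
    using Z_mono_weight[of v w] v_nonneg vw c(1) by (intro mult_left_mono) auto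
  also have "\<dots> \<le> Z w (x + X) (n1 + J)" by (rule Z_fill_ge) (use w0 c fill in auto)
  finally have Zw: "c ^ J * Z v x n1 \<le> Z w (x + X) (n1 + J)" .
  have ec: "exp (- (real J * \<bar>ln c\<bar>)) \<le> c ^ J" by (rule power_ge_exp_abs_ln[OF c(1)])
  have "exp (- (real J * M * \<bar>ln t\<bar>)) \<le> exp (- (real X * \<bar>ln t\<bar>))"
    using XM by (simp add: mult_right_mono)
  also have "\<dots> \<le> t ^ X" by (rule power_ge_exp_abs_ln[OF t])
  finally have et: "exp (- (real J * M * \<bar>ln t\<bar>)) \<le> t ^ X" .
  have "exp (- (real J * (\<bar>ln c\<bar> + M * \<bar>ln t\<bar>))) * (Z v x n1 * t ^ x)
      = exp (- (real J * \<bar>ln c\<bar>)) * exp (- (real J * M * \<bar>ln t\<bar>)) * (Z v x n1 * t ^ x)"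
    by (simp add: algebra_simps flip: exp_add)
  also have "\<dots> \<le> c ^ J * t ^ X * (Z v x n1 * t ^ x)"
    using ec et Z_nonneg[of v x n1] v_nonneg c(1) t by (intro mult_right_mono mult_mono) auto
  also have "\<dots> = (c ^ J * Z v x n1) * t ^ (x + X)" by (simp add: power_add algebra_simps)
  also have "\<dots> \<le> Z w (x + X) (n1 + J) * t ^ (x + X)" using Zw t by (intro mult_right_mono) auto
  finally show ?thesis .
qed

text \<open>Put a typical total of the tilted truncated weight \<open>v\<close> into all but \<open>\<lfloor>\<eta> n\<rfloor>\<close> boxes and absorb
  the remaining balls with weights from \<open>A\<close>; the conditions \<open>slack\<close> guarantee that the number of
  remaining balls lies between \<open>N0\<close> and \<open>M\<close> times the number of remaining boxes.\<close>

lemma Z_lower_bound_at: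
  fixes w :: "nat \<Rightarrow> real" and A :: "nat set"
  assumes w0: "\<And>k. w k \<ge> 0" and vw: "\<And>k. v k \<le> w k"
    and vd: "\<And>k. v k \<noteq> 0 \<Longrightarrow> d dvd k"
    and fillA: "\<And>X j. N0 \<le> X \<Longrightarrow> d dvd X \<Longrightarrow> X + C * M \<le> j * M \<Longrightarrow> fill A j X"
    and c: "c > 0" "c \<le> w 0" "\<And>a. a \<in> A \<Longrightarrow> c \<le> w a"
    and t: "t > 0" and eta: "0 < \<eta>" "\<eta> < 1" and \<mu>0: "\<mu> \<ge> 0" and \<gamma>: "\<gamma> > 0"
    and slack: "8 * \<gamma> \<le> \<eta> * \<mu> - \<bar>lam - \<mu>\<bar>" "8 * \<gamma> \<le> \<eta> * (real M - \<mu>) - \<bar>lam - \<mu>\<bar>"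
    and typical: "\<And>N. N \<ge> N1 \<Longrightarrow> \<exists>x. \<bar>real x - \<mu> * real N\<bar> \<le> \<gamma> * real N \<and>
       gf v t ^ N / (2 * (real K * real N + 1)) \<le> Z v x N * t ^ x"
    and H1: "\<bar>real m / real n - lam\<bar> < \<gamma>" and H2: "d dvd m"
    and H3: "(real N0 + \<mu>) / (6 * \<gamma>) \<le> real n" and H4: "(real C * real M + real M) / (6 * \<gamma>) \<le> real n"
    and H5: "real N1 / (1 - \<eta>) \<le> real n" and H6: "1 \<le> real n"
    and H7: "2 * (real K * real n + 1) \<le> exp (\<delta> * real n)"
  shows "Z w m n * t ^ m \<ge>
     gf v t ^ n * exp (- ((\<eta> * (\<bar>ln c\<bar> + real M * \<bar>ln t\<bar> + \<bar>ln (gf v t)\<bar>) + \<delta>) * real n))"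
proof -
  define P where "P = gf v t"
  have P: "P > 0" using gf_pos t by (simp add: P_def)
  define J where "J = nat \<lfloor>\<eta> * real n\<rfloor>"
  have Jf: "real J \<le> \<eta> * real n" "\<eta> * real n - 1 < real J" using eta by (simp_all add: J_def)
  define n1 where "n1 = n - J"
  have "\<eta> * real n \<le> real n" using eta by (intro mult_left_le_one_le) auto
  then have Jn: "J \<le> n" using Jf(1) by linarith
  have n1r: "real n1 = real n - real J" using Jn by (simp add: n1_def)
  have "real N1 \<le> (1 - \<eta>) * real n" using H5 eta by (simp add: pos_divide_le_eq mult.commute)
  then have "N1 \<le> n1" using Jf(1) n1r by (simp add: algebra_simps)
  then obtain x where x: "\<bar>real x - \<mu> * real n1\<bar> \<le> \<gamma> * real n1"
      and Zx: "P ^ n1 / (2 * (real K * real n1 + 1)) \<le> Z v x n1 * t ^ x"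
    using typical[unfolded P_def[symmetric]] by blast
  have Kn1: "0 \<le> real K * real n1" "real K * real n1 \<le> real K * real n"
    by (simp_all add: mult_left_mono n1_def)
  have D1: "0 < 2 * (real K * real n1 + 1)" by (intro mult_pos_pos add_nonneg_pos) auto
  have D2: "2 * (real K * real n1 + 1) \<le> exp (\<delta> * real n)" using Kn1(2) H7 by simp
  have "0 < P ^ n1 / (2 * (real K * real n1 + 1))" using P D1 by simp
  then have "Z v x n1 \<noteq> 0" using Zx by auto
  then have dx: "d dvd x" by (intro dvd_if_Z_neq_0[of v d x n1] vd)
  have mb: "\<bar>real m - lam * real n\<bar> < \<gamma> * real n"
    using H1 H6 by (simp add: abs_less_iff field_simps)
  have large: "real N0 + \<mu> \<le> 6 * \<gamma> * real n" "real C * real M + real M \<le> 6 * \<gamma> * real n"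
    using H3 H4 \<gamma> by (simp_all add: pos_divide_le_eq mult.commute)
  have "\<bar>real x - \<mu> * (real n - real J)\<bar> \<le> \<gamma> * (real n - real J)" using x n1r by simp
  from fill_gap_bounds[OF mb this _ _ _ _ \<mu>0 eta(1) slack large]
  have gap: "real N0 \<le> real m - real x" "real m - real x + real C * real M \<le> real J * real M"
    using Jf Jn \<gamma> by simp_all
  define X where "X = m - x"
  have xm: "x + X = m" and Xr: "real X = real m - real x" using gap(1) by (simp_all add: X_def)
  have "real N0 \<le> real X" "real (X + C * M) \<le> real (J * M)" using gap Xr by simp_all
  then have fillX: "fill A J X" by (intro fillA) (simp_all only: of_nat_le_iff X_def H2 dx dvd_diff_nat)
  have "0 \<le> real C * real M" by simp
  then have "real X \<le> real J * real M" using gap(2) Xr by linarith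
  then have ext: "exp (- (real J * (\<bar>ln c\<bar> + real M * \<bar>ln t\<bar>))) * (Z v x n1 * t ^ x) \<le> Z w m n * t ^ m"
    using Z_extend_ge[OF w0 vw c t fillX, of "real M" x n1] xm Jn by (simp add: n1_def)
  show ?thesis
    using exp_loss_le[OF P Jn Jf(1) _ D1[unfolded n1_def] D2[unfolded n1_def] Zx[unfolded n1_def]
        ext[unfolded n1_def]]
    by (simp add: P_def add.assoc)
qed

lemma Z_lower_bound:
  fixes w :: "nat \<Rightarrow> real" and A :: "nat set" and mm nn :: "nat \<Rightarrow> nat"
  assumes w0: "\<And>k. w k \<ge> 0" and vw: "\<And>k. v k \<le> w k"
    and vd: "\<And>k. v k \<noteq> 0 \<Longrightarrow> d dvd k"
    and fillA: "\<And>X j. N0 \<le> X \<Longrightarrow> d dvd X \<Longrightarrow> X + C * M \<le> j * M \<Longrightarrow> fill A j X"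
    and c: "c > 0" "c \<le> w 0" "\<And>a. a \<in> A \<Longrightarrow> c \<le> w a"
    and t: "t > 0"
    and nn: "filterlim nn at_top sequentially"
    and lim: "(\<lambda>j. real (mm j) / real (nn j)) \<longlonglongrightarrow> lam"
    and dm: "\<forall>\<^sub>F j in sequentially. d dvd mm j"
    and eta: "0 < \<eta>" "\<eta> < 1"
    and mu1: "\<bar>lam - gf1 v t / gf v t\<bar> < \<eta> * (gf1 v t / gf v t)"
    and mu2: "\<bar>lam - gf1 v t / gf v t\<bar> < \<eta> * (real M - gf1 v t / gf v t)"
    and dl: "\<delta> > 0"
  shows "\<forall>\<^sub>F j in sequentially. Z w (mm j) (nn j) * t ^ (mm j) \<ge>
     gf v t ^ (nn j) * exp (- ((\<eta> * (\<bar>ln c\<bar> + real M * \<bar>ln t\<bar> + \<bar>ln (gf v t)\<bar>) + \<delta>) * real (nn j)))"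
proof -
  define \<mu> where "\<mu> = gf1 v t / gf v t"
  have mu0: "\<mu> \<ge> 0" using gf1_nonneg[of t] gf_pos[of t] t by (simp add: \<mu>_def)
  define \<gamma> where "\<gamma> = min (\<eta> * \<mu> - \<bar>lam - \<mu>\<bar>) (\<eta> * (real M - \<mu>) - \<bar>lam - \<mu>\<bar>) / 8"
  have \<gamma>: "\<gamma> > 0" using mu1 mu2 by (simp add: \<gamma>_def \<mu>_def)
  have slack: "8 * \<gamma> \<le> \<eta> * \<mu> - \<bar>lam - \<mu>\<bar>" "8 * \<gamma> \<le> \<eta> * (real M - \<mu>) - \<bar>lam - \<mu>\<bar>"
    by (simp_all add: \<gamma>_def)
  from exists_typical_total[OF t \<gamma>] obtain N1 where N1: "\<And>N. N \<ge> N1 \<Longrightarrow> \<exists>x.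
      \<bar>real x - \<mu> * real N\<bar> \<le> \<gamma> * real N \<and> gf v t ^ N / (2 * (real K * real N + 1)) \<le> Z v x N * t ^ x"
    unfolding eventually_sequentially \<mu>_def by blast
  have rn: "filterlim (\<lambda>j. real (nn j)) at_top sequentially"
    by (rule filterlim_compose[OF filterlim_real_sequentially nn])
  have big: "\<forall>\<^sub>F j in sequentially. B \<le> real (nn j)" for B
    using rn by (simp add: filterlim_at_top)
  have ex: "\<forall>\<^sub>F j in sequentially. 2 * (real K * real (nn j) + 1) \<le> exp (\<delta> * real (nn j))"
    using filterlim_iff[THEN iffD1, OF rn, rule_format, OF linear_le_exp_eventually[OF dl, of K]] by simp
  have ml: "\<forall>\<^sub>F j in sequentially. \<bar>real (mm j) / real (nn j) - lam\<bar> < \<gamma>"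
    using tendstoD[OF lim \<gamma>] by (simp add: dist_real_def)
  have "\<forall>\<^sub>F j in sequentially. \<bar>real (mm j) / real (nn j) - lam\<bar> < \<gamma> \<and> d dvd mm j \<and>
      (real N0 + \<mu>) / (6 * \<gamma>) \<le> real (nn j) \<and> (real C * real M + real M) / (6 * \<gamma>) \<le> real (nn j) \<and>
      real N1 / (1 - \<eta>) \<le> real (nn j) \<and> 1 \<le> real (nn j) \<and>
      2 * (real K * real (nn j) + 1) \<le> exp (\<delta> * real (nn j))"
    by (intro eventually_conj ml dm big ex)
  then show ?thesis
    by (rule eventually_mono)
      (use Z_lower_bound_at[OF w0 vw vd fillA c t eta mu0 \<gamma> slack N1] in auto)
qed

end

section \<open>Upper bound for allocations with a large box\<close>

lemma Zgen_le_prod: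
  assumes f0: "\<And>i k. f i k \<ge> 0" and u: "u > 0"
  shows "Zgen f x N \<le> (\<Prod>i<N. \<Sum>k\<le>x. f i k * u ^ k) / u ^ x"
proof (induction N arbitrary: x)
  case 0 then show ?case using u by (simp add: Zgen_0)
next
  case (Suc N)
  define Pr where "Pr = (\<Prod>i<N. \<Sum>k\<le>x. f i k * u ^ k)"
  have "Zgen f x (Suc N) = (\<Sum>k\<le>x. f N k * Zgen f (x-k) N)" by (rule Zgen_Suc)
  also have "\<dots> \<le> (\<Sum>k\<le>x. f N k * (Pr * u ^ k / u ^ x))"
  proof (intro sum_mono mult_left_mono f0)
    fix k assume k: "k \<in> {..x}"
    have "Zgen f (x-k) N \<le> (\<Prod>i<N. \<Sum>k'\<le>x-k. f i k' * u ^ k') / u ^ (x-k)" by (rule Suc.IH)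
    also have "(\<Prod>i<N. \<Sum>k'\<le>x-k. f i k' * u ^ k') \<le> Pr"
      unfolding Pr_def using f0 u
      by (intro prod_mono conjI sum_nonneg sum_mono2) (auto intro!: mult_nonneg_nonneg)
    then have "(\<Prod>i<N. \<Sum>k'\<le>x-k. f i k' * u ^ k') / u ^ (x-k) \<le> Pr / u ^ (x - k)"
      using u by (intro divide_right_mono) auto
    also have "Pr / u ^ (x - k) = Pr * u ^ k / u ^ x"
    proof -
      have "u ^ x = u ^ k * u ^ (x - k)" using k by (simp flip: power_add)
      then show ?thesis using u by (simp add: field_simps)
    qed
    finally show "Zgen f (x-k) N \<le> Pr * u ^ k / u ^ x" .
  qed
  also have "\<dots> = (\<Sum>k\<le>x. (f N k * u ^ k) * (Pr / u ^ x))"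
    by (intro sum.cong refl) (simp add: algebra_simps)
  also have "\<dots> = (\<Sum>k\<le>x. f N k * u ^ k) * (Pr / u ^ x)"
    by (rule sum_distrib_right[symmetric])
  also have "\<dots> = (\<Sum>k\<le>x. f N k * u ^ k) * Pr / u ^ x" by simp
  also have "\<dots> = (\<Prod>i<Suc N. \<Sum>k\<le>x. f i k * u ^ k) / u ^ x"
    by (simp add: Pr_def mult.commute)
  finally show ?case .
qed

text \<open>Chernoff bound for a single box: compare \<open>wt\<close> restricted to \<open>y i > e\<close> with the partition
  function of the weights that vanish at box \<open>i\<close> below \<open>e\<close>.\<close>

lemma weight_large_box_le:
  fixes w :: "nat \<Rightarrow> real"
  assumes w0: "\<And>k. w k \<ge> 0" and u: "u > 0" and su: "summable (\<lambda>k. w k * u ^ k)"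
    and i: "i < n"
    and T: "(\<Sum>k\<in>{k\<in>{..m}. e < real k}. w k * u ^ k) \<le> T"
  shows "(\<Sum>y\<in>{y\<in>boxes m n. e < real (y i)}. wt w n y) \<le> T * gf w u ^ (n - 1) / u ^ m"
proof -
  define f where "f j k = (if j = i \<and> \<not> e < real k then 0 else w k)" for j k
  have f0: "f j k \<ge> 0" for j k using w0 by (simp add: f_def)
  have "(\<Sum>y\<in>{y\<in>boxes m n. e < real (y i)}. wt w n y) = Zgen f m n"
    unfolding Zgen_def sum.inter_filter[OF finite_boxes]
  proof (intro sum.cong refl)
    fix y
    show "(if e < real (y i) then wt w n y else 0) = (\<Prod>j<n. f j (y j))"
    proof (cases "e < real (y i)")
      case True
      then have "(\<Prod>j<n. f j (y j)) = (\<Prod>j<n. w (y j))" by (intro prod.cong) (auto simp: f_def)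
      then show ?thesis using True by (simp add: wt_def)
    next
      case False
      then have "(\<Prod>j<n. f j (y j)) = 0" using i by (intro prod_zero) (auto simp: f_def)
      then show ?thesis using False by simp
    qed
  qed
  also have "\<dots> \<le> (\<Prod>j<n. \<Sum>k\<le>m. f j k * u ^ k) / u ^ m" by (rule Zgen_le_prod[OF f0 u])
  also have "\<dots> \<le> (\<Prod>j<n. if j = i then T else gf w u) / u ^ m"
  proof (intro divide_right_mono prod_mono conjI)
    fix j assume j: "j \<in> {..<n}"
    show "0 \<le> (\<Sum>k\<le>m. f j k * u ^ k)" using f0 u by (intro sum_nonneg) auto
    show "(\<Sum>k\<le>m. f j k * u ^ k) \<le> (if j = i then T else gf w u)"
    proof (cases "j = i")
      case True
      have "(\<Sum>k\<le>m. f j k * u ^ k) = (\<Sum>k\<le>m. if e < real k then w k * u ^ k else 0)"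
        using True by (intro sum.cong) (auto simp: f_def)
      also have "\<dots> = (\<Sum>k\<in>{k\<in>{..m}. e < real k}. w k * u ^ k)"
        by (rule sum.inter_filter[symmetric]) simp
      finally show ?thesis using T True by simp
    next
      case False
      have "(\<Sum>k<Suc m. w k * u ^ k) \<le> gf w u" unfolding gf_def
        using su w0 u by (intro sum_le_suminf) auto
      then show ?thesis using False by (simp add: f_def lessThan_Suc_atMost)
    qed
  qed (use u in auto)
  also have "(\<Prod>j<n. if j = i then T else gf w u) = T * gf w u ^ card ({..<n} - {i})"
    using i by (subst prod.If_cases) (auto simp: prod_constant Diff_eq)
  also have "card ({..<n} - {i}) = n - 1" using i by simp
  finally show ?thesis .
qed

lemma weight_large_max_le:
  fixes w :: "nat \<Rightarrow> real"
  assumes w0: "\<And>k. w k \<ge> 0" and u: "u > 0" and su: "summable (\<lambda>k. w k * u ^ k)"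
    and n: "n > 0"
    and T: "(\<Sum>k\<in>{k\<in>{..m}. e < real k}. w k * u ^ k) \<le> T"
  shows "(\<Sum>y\<in>{y\<in>boxes m n. e < real (Ymax n y)}. wt w n y) \<le> real n * T * gf w u ^ (n - 1) / u ^ m"
proof -
  have wt0: "wt w n y \<ge> 0" for y unfolding wt_def using w0 by (intro prod_nonneg) auto
  have "(\<Sum>y\<in>{y\<in>boxes m n. e < real (Ymax n y)}. wt w n y)
      \<le> (\<Sum>y\<in>{y\<in>boxes m n. e < real (Ymax n y)}. \<Sum>i<n. if e < real (y i) then wt w n y else 0)"
  proof (intro sum_mono)
    fix y assume y: "y \<in> {y\<in>boxes m n. e < real (Ymax n y)}"
    have "Ymax n y \<in> y ` {..<n}" unfolding Ymax_def using n by (intro Max_in) auto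
    then obtain i where i: "i < n" "y i = Ymax n y" by auto
    then have "wt w n y = (if e < real (y i) then wt w n y else 0)" using y by simp
    also have "\<dots> \<le> (\<Sum>i<n. if e < real (y i) then wt w n y else 0)"
      by (rule member_le_sum) (use i wt0 in auto)
    finally show "wt w n y \<le> (\<Sum>i<n. if e < real (y i) then wt w n y else 0)" .
  qed
  also have "\<dots> \<le> (\<Sum>y\<in>boxes m n. \<Sum>i<n. if e < real (y i) then wt w n y else 0)"
    using wt0 by (intro sum_mono2 finite_boxes sum_nonneg) auto
  also have "\<dots> = (\<Sum>i<n. \<Sum>y\<in>{y\<in>boxes m n. e < real (y i)}. wt w n y)"
    by (simp add: sum.swap[of _ "boxes m n"] sum.inter_filter finite_boxes)
  also have "\<dots> \<le> (\<Sum>i<n. T * gf w u ^ (n - 1) / u ^ m)"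
    by (intro sum_mono weight_large_box_le[OF w0 u su _ T]) auto
  finally show ?thesis by simp
qed

lemma mult_exp_neg_tendsto_0:
  fixes r :: real assumes "r > 0"
  shows "((\<lambda>x. x * exp (- (r * x))) \<longlongrightarrow> 0) at_top"
  using assms by real_asymp

lemma Pbb_large_max_le:
  fixes w :: "nat \<Rightarrow> real"
  assumes w0: "\<And>k. w k \<ge> 0" and u: "u > 0" and su: "summable (\<lambda>k. w k * u ^ k)" and \<Phi>: "gf w u > 0"
    and t: "t > 0" and P: "P > 0" and q: "0 < q" and Cq: "Cq \<ge> 0" and n: "n \<ge> 1"
    and tail: "(\<Sum>k\<in>{k\<in>{..m}. \<epsilon> * real n < real k}. w k * u ^ k) \<le> Cq * q powr (\<epsilon> * real n)"
    and lb: "Z w m n * t ^ m \<ge> P ^ n * exp (- (a * real n))"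
    and ex: "ln (gf w u) - ln P + real m / real n * (ln t - ln u) + a + \<epsilon> * ln q \<le> - r"
  shows "Pbb w m n (\<lambda>y. real (Ymax n y) > \<epsilon> * real n) \<le> Cq / gf w u * (real n * exp (- (r * real n)))"
proof -
  define \<Phi>' where "\<Phi>' = gf w u"
  define Num where "Num = (\<Sum>y\<in>{y\<in>boxes m n. \<epsilon> * real n < real (Ymax n y)}. wt w n y)"
  define D where "D = P ^ n * exp (- (a * real n)) / t ^ m"
  have num: "Num \<le> real n * (Cq * q powr (\<epsilon> * real n)) * \<Phi>' ^ (n - 1) / u ^ m"
    unfolding Num_def \<Phi>'_def using n by (intro weight_large_max_le[OF w0 u su _ tail]) auto
  have "Num \<ge> 0" unfolding Num_def wt_def using w0 by (intro sum_nonneg prod_nonneg) auto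
  moreover have "D > 0" using P t by (simp add: D_def)
  moreover have "D \<le> Z w m n" using lb t by (simp add: D_def pos_divide_le_eq)
  ultimately have "Pbb w m n (\<lambda>y. real (Ymax n y) > \<epsilon> * real n) \<le> Num / D"
    by (simp add: Pbb_def Num_def divide_left_mono)
  also have "\<dots> \<le> (real n * (Cq * q powr (\<epsilon> * real n)) * \<Phi>' ^ (n - 1) / u ^ m) / D"
    using num \<open>D > 0\<close> by (intro divide_right_mono) auto
  also have "\<dots> = real n * Cq * exp ((\<epsilon> * real n) * ln q) * exp (real (n - 1) * ln \<Phi>') / exp (real m * ln u) /
          (exp (real n * ln P) * exp (- (a * real n)) / exp (real m * ln t))"
  proof -
    have "q powr (\<epsilon> * real n) = exp ((\<epsilon> * real n) * ln q)" using q by (simp add: powr_def mult.commute)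
    moreover have "\<Phi>' ^ (n - 1) = exp (real (n - 1) * ln \<Phi>')" using \<Phi> by (simp add: \<Phi>'_def exp_of_nat_mult)
    moreover have "u ^ m = exp (real m * ln u)" using u by (simp add: exp_of_nat_mult)
    moreover have "P ^ n = exp (real n * ln P)" using P by (simp add: exp_of_nat_mult)
    moreover have "t ^ m = exp (real m * ln t)" using t by (simp add: exp_of_nat_mult)
    ultimately show ?thesis by (simp add: D_def mult.assoc)
  qed
  also have "\<dots> = real n * Cq * exp ((\<epsilon> * real n) * ln q + real (n - 1) * ln \<Phi>' - real m * ln u
                  - real n * ln P + a * real n + real m * ln t)"
    by (simp add: exp_add exp_diff exp_minus field_simps)
  also have "(\<epsilon> * real n) * ln q + real (n - 1) * ln \<Phi>' - real m * ln u - real n * ln P + a * real n + real m * ln t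
      = real n * (ln \<Phi>' - ln P + real m / real n * (ln t - ln u) + a + \<epsilon> * ln q) - ln \<Phi>'"
    using n by (simp add: of_nat_diff field_simps)
  also have "real n * Cq * exp (real n * (ln \<Phi>' - ln P + real m / real n * (ln t - ln u) + a + \<epsilon> * ln q) - ln \<Phi>')
      \<le> real n * Cq * exp (real n * (- r) - ln \<Phi>')"
  proof -
    have "real n * (ln \<Phi>' - ln P + real m / real n * (ln t - ln u) + a + \<epsilon> * ln q) \<le> real n * (- r)"
      using ex by (intro mult_left_mono) (auto simp: \<Phi>'_def)
    then show ?thesis using Cq by (intro mult_left_mono) auto
  qed
  also have "real n * Cq * exp (real n * (- r) - ln \<Phi>') = Cq / gf w u * (real n * exp (- (r * real n)))"
    using \<Phi> by (simp add: \<Phi>'_def exp_diff field_simps)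
  finally show ?thesis .
qed

lemma Pbb_large_max_tendsto_0:
  fixes w :: "nat \<Rightarrow> real" and mm nn :: "nat \<Rightarrow> nat"
  assumes w0: "\<And>k. w k \<ge> 0" and w00: "w 0 > 0"
    and u: "u > 0" and su: "summable (\<lambda>k. w k * u ^ k)"
    and t: "t > 0" and P: "P > 0"
    and q: "0 < q" and Cq: "Cq \<ge> 0"
    and nn: "filterlim nn at_top sequentially"
    and tail: "\<forall>\<^sub>F j in sequentially. (\<Sum>k\<in>{k\<in>{..mm j}. \<epsilon> * real (nn j) < real k}. w k * u ^ k)
                  \<le> Cq * q powr (\<epsilon> * real (nn j))"
    and lb: "\<forall>\<^sub>F j in sequentially. Z w (mm j) (nn j) * t ^ (mm j) \<ge> P ^ (nn j) * exp (- (a * real (nn j)))"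
    and ex: "\<forall>\<^sub>F j in sequentially.
        ln (gf w u) - ln P + real (mm j) / real (nn j) * (ln t - ln u) + a + \<epsilon> * ln q \<le> - r"
    and r: "r > 0"
  shows "(\<lambda>j. Pbb w (mm j) (nn j) (\<lambda>y. real (Ymax (nn j) y) > \<epsilon> * real (nn j))) \<longlonglongrightarrow> 0"
proof (rule tendsto_sandwich[OF _ _ tendsto_const])
  have \<Phi>: "gf w u > 0"
  proof -
    have "(\<Sum>k<1. w k * u ^ k) \<le> gf w u" unfolding gf_def
      using su w0 u by (intro sum_le_suminf) auto
    then show ?thesis using w00 by simp
  qed
  have rn: "filterlim (\<lambda>j. real (nn j)) at_top sequentially"
    by (rule filterlim_compose[OF filterlim_real_sequentially nn])
  have "\<forall>\<^sub>F j in sequentially. 1 \<le> real (nn j)" using rn[unfolded filterlim_at_top] by blast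
  with tail lb ex
  show "\<forall>\<^sub>F j in sequentially. Pbb w (mm j) (nn j) (\<lambda>y. real (Ymax (nn j) y) > \<epsilon> * real (nn j))
      \<le> Cq / gf w u * (real (nn j) * exp (- (r * real (nn j))))"
    by eventually_elim (intro Pbb_large_max_le[OF w0 u su \<Phi> t P q Cq]; simp)
  show "(\<lambda>j. Cq / gf w u * (real (nn j) * exp (- (r * real (nn j))))) \<longlonglongrightarrow> 0"
    using tendsto_mult_left[OF filterlim_compose[OF mult_exp_neg_tendsto_0[OF r] rn], of "Cq / gf w u"]
    by simp
  show "\<forall>\<^sub>F j in sequentially. 0 \<le> Pbb w (mm j) (nn j) (\<lambda>y. real (Ymax (nn j) y) > \<epsilon> * real (nn j))"
    unfolding Pbb_def Z_def wt_def using w0 by (intro always_eventually allI divide_nonneg_nonneg sum_nonneg prod_nonneg) auto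
qed

section \<open>The tilted mean of the weight sequence\<close>

lemma isCont_exists_greater_left:
  fixes p :: "real \<Rightarrow> real"
  assumes "isCont p r" "p r > c" "lo < r"
  shows "\<exists>s. lo < s \<and> s < r \<and> p s > c"
proof -
  obtain d where d: "d > 0" "\<And>s. s \<noteq> r \<Longrightarrow> norm (s - r) < d \<Longrightarrow> norm (p s - p r) < p r - c"
    using LIM_D[OF isContD[OF assms(1)], of "p r - c"] assms(2) by auto
  define h where "h = min (d/2) ((r - lo)/2)"
  have h3: "h \<le> (r - lo)/2" unfolding h_def by (rule min.cobounded2)
  have h12: "0 < h" "h < d" using d(1) assms(3) by (auto simp: h_def)
  note h = h12 h3
  define s where "s = r - h"
  have "norm (p s - p r) < p r - c" using d(2)[of s] h by (simp add: s_def)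
  then have "p s > c" by (simp add: abs_less_iff)
  moreover have "lo < s" using h(3) assms(3) unfolding s_def by (simp add: field_simps)
  moreover have "s < r" using h(1) unfolding s_def by linarith
  ultimately show ?thesis by blast
qed

locale weight_seq =
  fixes w :: "nat \<Rightarrow> real"
  assumes w_nonneg: "\<And>k. w k \<ge> 0" and w_pos0: "w 0 > 0"
begin

lemma summable_gf: assumes "ereal \<bar>t\<bar> < conv_radius w" shows "summable (\<lambda>k. w k * t ^ k)"
  using summable_in_conv_radius[of t w] assms by simp

lemma summable_gf1: assumes t: "0 \<le> t" "ereal t < conv_radius w"
  shows "summable (\<lambda>k. real k * w k * t ^ k)"
proof -
  obtain K where K: "t < K" "\<And>x. \<bar>x\<bar> < K \<Longrightarrow> ereal \<bar>x\<bar> < conv_radius w"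
  proof (cases "conv_radius w")
    case (real R)
    then show ?thesis using t by (intro that[of R]) auto
  next
    case PInf
    then show ?thesis by (intro that[of "t + 1"]) auto
  next
    case MInf
    then show ?thesis using conv_radius_nonneg[of w] by simp
  qed
  have "summable (\<lambda>n. diffs w n * t ^ n)"
    by (rule termdiff_converges[of t K]) (use K t summable_gf in auto)
  then have "summable (\<lambda>n. t * (diffs w n * t ^ n))" by (rule summable_mult)
  moreover have "(\<lambda>n. t * (diffs w n * t ^ n)) = (\<lambda>n. real (Suc n) * w (Suc n) * t ^ Suc n)"
    by (auto simp: diffs_def algebra_simps)
  ultimately have "summable (\<lambda>n. real (Suc n) * w (Suc n) * t ^ Suc n)" by simp
  then show ?thesis using summable_Suc_iff[of "\<lambda>n. real n * w n * t ^ n"] by simp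
qed

lemma gf_ge_w0: assumes "0 \<le> t" "summable (\<lambda>k. w k * t ^ k)" shows "gf w t \<ge> w 0"
proof -
  have "(\<Sum>k<1. w k * t ^ k) \<le> gf w t" unfolding gf_def
    using assms w_nonneg by (intro sum_le_suminf) auto
  then show ?thesis by simp
qed

lemma gf_pos: assumes "0 \<le> t" "summable (\<lambda>k. w k * t ^ k)" shows "gf w t > 0"
  using gf_ge_w0[OF assms] w_pos0 by simp

lemma gf1_nonneg: assumes "0 \<le> t" "summable (\<lambda>k. real k * w k * t ^ k)" shows "gf1 w t \<ge> 0"
  unfolding gf1_def using assms w_nonneg by (intro suminf_nonneg) auto

lemma Phi_eq_gf: assumes "0 \<le> t" "summable (\<lambda>k. w k * t ^ k)" shows "Phi w t = ennreal (gf w t)"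
  unfolding Phi_def gf_def using assms w_nonneg by (intro suminf_ennreal2) auto

lemma suminf_ennreal_gf1: assumes "0 \<le> t" "summable (\<lambda>k. real k * w k * t ^ k)"
  shows "(\<Sum>k. ennreal (real k * w k * t ^ k)) = ennreal (gf1 w t)"
  unfolding gf1_def using assms w_nonneg by (intro suminf_ennreal2) auto

lemma Psi_eq_gf: assumes "0 \<le> t" "summable (\<lambda>k. w k * t ^ k)" "summable (\<lambda>k. real k * w k * t ^ k)"
  shows "Psi w t = ennreal (gf1 w t / gf w t)"
  unfolding Psi_def using assms
  by (simp add: Phi_eq_gf suminf_ennreal_gf1 divide_ennreal gf1_nonneg gf_pos)

lemma gf_mult_ge:
  assumes u: "u > 0" and x: "x > 0" and s1: "summable (\<lambda>k. w k * u ^ k)"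
    and s2: "summable (\<lambda>k. real k * w k * u ^ k)" and s3: "summable (\<lambda>k. w k * (u * x) ^ k)"
  shows "gf w (u * x) \<ge> gf w u * x powr (gf1 w u / gf w u)"
  using gf_pos[of u] assms w_nonneg by (intro gf_mult_ge_powr) auto

lemma exists_psi_gt_below:
  assumes r: "r > 0" and rho: "\<And>s. 0 < s \<Longrightarrow> s < r \<Longrightarrow> ereal s < conv_radius w"
    and sr: "summable (\<lambda>k. w k * r ^ k)" and th: "\<theta> \<ge> 0"
    and K: "(\<Sum>k<K. real k * w k * r ^ k) > \<theta> * gf w r"
  shows "\<exists>u. 0 < u \<and> u < r \<and> \<theta> * gf w u < gf1 w u"
proof -
  have "isCont (\<lambda>s. \<Sum>k<K. real k * w k * s ^ k) r" by (intro continuous_intros)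
  from isCont_exists_greater_left[OF this K r] obtain u where u: "0 < u" "u < r"
    and pu: "(\<Sum>k<K. real k * w k * u ^ k) > \<theta> * gf w r" by auto
  have ur: "ereal u < conv_radius w" using rho u by simp
  have su: "summable (\<lambda>k. w k * u ^ k)" using summable_gf[of u] ur u by simp
  have su1: "summable (\<lambda>k. real k * w k * u ^ k)" using summable_gf1[of u] ur u by simp
  have "gf w u \<le> gf w r" unfolding gf_def
    using su sr w_nonneg u by (intro suminf_le mult_left_mono power_mono) auto
  then have "\<theta> * gf w u \<le> \<theta> * gf w r" using th by (rule mult_left_mono)
  moreover have "(\<Sum>k<K. real k * w k * u ^ k) \<le> gf1 w u" unfolding gf1_def
    using su1 w_nonneg u by (intro sum_le_suminf) auto
  ultimately show ?thesis using u pu by (intro exI[of _ u]) auto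
qed

lemma support_le_if_psi_le:
  assumes all: "\<And>s. 0 < s \<Longrightarrow> summable (\<lambda>k. w k * s ^ k) \<and> summable (\<lambda>k. real k * w k * s ^ k)"
    and le: "\<And>s. 1 \<le> s \<Longrightarrow> gf1 w s / gf w s \<le> lam" and lam: "lam \<ge> 0"
  shows "\<And>k. w k > 0 \<Longrightarrow> real k \<le> lam"
proof (rule ccontr)
  \<comment> \<open>Tilting from \<open>s\<close> back to \<open>1\<close> gives \<open>\<Phi>(s) \<le> \<Phi>(1) s^\<lambda>\<close>, while \<open>\<Phi>(s) \<ge> w k s^k\<close>.\<close>
  fix k assume wk: "w k > 0" and kl: "\<not> real k \<le> lam"
  define B where "B = gf w 1"
  have bound: "w k * s powr real k \<le> B * s powr lam" if s: "s \<ge> 1" for s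
  proof -
    have s0: "s > 0" using s by simp
    have J: "gf w (s * (1/s)) \<ge> gf w s * (1/s) powr (gf1 w s / gf w s)"
      using gf_mult_ge[OF s0 _ conjunct1[OF all[OF s0]] conjunct2[OF all[OF s0]], of "1/s"] s0 all[of "1"]
      by simp
    have "(1/s) powr lam \<le> (1/s) powr (gf1 w s / gf w s)"
      using le[OF s] s0 s by (intro powr_mono') auto
    then have "gf w s * (1/s) powr lam \<le> gf w s * (1/s) powr (gf1 w s / gf w s)"
      using gf_pos[of s] all[OF s0] s0 by (intro mult_left_mono) auto
    with J have "gf w s * (1/s) powr lam \<le> B" using s0 by (simp add: B_def)
    then have gfs: "gf w s \<le> B * s powr lam"
      using s0 by (simp add: powr_divide field_simps)
    have "(\<Sum>i\<in>{k}. w i * s ^ i) \<le> (\<Sum>i. w i * s ^ i)"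
      using all[OF s0] w_nonneg s0 by (intro sum_le_suminf) auto
    then have "w k * s ^ k \<le> gf w s" by (simp add: gf_def)
    then show ?thesis using gfs s0 by (simp add: powr_realpow)
  qed
  define e where "e = real k - lam"
  have e: "e > 0" using kl by (simp add: e_def)
  define s where "s = max 1 ((B / w k + 1) powr (1 / e))"
  have s1: "s \<ge> 1" by (simp add: s_def)
  have B0: "B > 0" using gf_pos[of 1] all[of 1] by (simp add: B_def)
  have "(B / w k + 1) = ((B / w k + 1) powr (1 / e)) powr e"
    using e B0 wk by (simp add: powr_powr)
  also have "\<dots> \<le> s powr e" using e B0 wk by (intro powr_mono2) (auto simp: s_def)
  finally have sB: "B / w k + 1 \<le> s powr e" .
  have "w k * s powr real k \<le> B * s powr lam" by (rule bound[OF s1])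
  moreover have "s powr real k = s powr e * s powr lam" using s1 by (simp add: e_def flip: powr_add)
  ultimately have "w k * s powr e \<le> B" using s1 by (simp add: mult.assoc)
  moreover have "w k * (B / w k + 1) \<le> w k * s powr e" using sB wk by (intro mult_left_mono) auto
  moreover have "w k * (B / w k + 1) = B + w k" using wk by (simp add: field_simps)
  ultimately show False using wk by linarith
qed

lemma Phi_finite_if_psi_le:
  assumes R: "R > 0" and rho: "\<And>s. 0 < s \<Longrightarrow> s < R \<Longrightarrow> ereal s < conv_radius w" and lam: "lam \<ge> 0"
    and all: "\<And>s. 0 < s \<Longrightarrow> s < R \<Longrightarrow> gf1 w s / gf w s \<le> lam"
  shows "Phi w R < \<infinity>"
proof -
  have sm: "summable (\<lambda>k. w k * s ^ k) \<and> summable (\<lambda>k. real k * w k * s ^ k)" if "0 < s" "s < R" for s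
    using summable_gf[of s] summable_gf1[of s] rho[OF that] that by auto
  \<comment> \<open>Tilting from \<open>s\<close> back to \<open>R/2\<close> bounds \<open>\<Phi>(s)\<close> uniformly for \<open>s < R\<close>.\<close>
  define u where "u = R / 2"
  have u: "0 < u" "u < R" using R by (auto simp: u_def)
  define B where "B = gf w u / (u / R) powr lam"
  have uR: "(u / R) powr lam > 0" using u R by simp
  have bnd: "gf w s \<le> B" if s: "u \<le> s" "s < R" for s
  proof -
    have s0: "s > 0" using s u by simp
    have J: "gf w (s * (u / s)) \<ge> gf w s * (u / s) powr (gf1 w s / gf w s)"
      using gf_mult_ge[OF s0, of "u/s"] sm[OF s0 s(2)] sm[OF u] s0 u by simp
    have "(u / s) powr lam \<le> (u / s) powr (gf1 w s / gf w s)"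
      using all[OF s0 s(2)] s0 s u by (intro powr_mono') auto
    moreover have "(u / R) powr lam \<le> (u / s) powr lam"
      using lam u s s0 by (intro powr_mono2) (auto simp: frac_le)
    ultimately have "(u / R) powr lam \<le> (u / s) powr (gf1 w s / gf w s)" by simp
    then have "gf w s * (u / R) powr lam \<le> gf w s * (u / s) powr (gf1 w s / gf w s)"
      using gf_pos[of s] sm[OF s0 s(2)] s0 by (intro mult_left_mono) auto
    with J have "gf w s * (u / R) powr lam \<le> gf w u" using s0 by simp
    then show ?thesis using uR by (simp add: B_def pos_le_divide_eq)
  qed
  have part: "(\<Sum>k<K. w k * R ^ k) \<le> B" for K
  proof (rule ccontr)
    assume "\<not> ?thesis"
    then have gt: "(\<Sum>k<K. w k * R ^ k) > B" by simp
    have "isCont (\<lambda>s. \<Sum>k<K. w k * s ^ k) R" by (intro continuous_intros)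
    from isCont_exists_greater_left[OF this gt u(2)] obtain s where s: "u < s" "s < R" "(\<Sum>k<K. w k * s ^ k) > B" by auto
    have s0: "s > 0" using s u by simp
    have "(\<Sum>k<K. w k * s ^ k) \<le> gf w s" unfolding gf_def
      using sm[OF s0 s(2)] w_nonneg s0 by (intro sum_le_suminf) auto
    with bnd[of s] s show False by simp
  qed
  have "Phi w R = (SUP K. \<Sum>k<K. ennreal (w k * R ^ k))" unfolding Phi_def by (rule suminf_eq_SUP)
  also have "\<dots> \<le> ennreal B"
  proof (rule SUP_least)
    fix K
    have "(\<Sum>k<K. ennreal (w k * R ^ k)) = ennreal (\<Sum>k<K. w k * R ^ k)"
      using w_nonneg R by (intro sum_ennreal) auto
    also have "\<dots> \<le> ennreal B" using part[of K] by (rule ennreal_leI)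
    finally show "(\<Sum>k<K. ennreal (w k * R ^ k)) \<le> ennreal B" .
  qed
  also have "\<dots> < \<infinity>" by (simp add: infinity_ennreal_def)
  finally show ?thesis .
qed

section \<open>The cases of the hypothesis \<open>\<lambda> \<le> \<nu>\<close>\<close>

lemma gf_lt_gf1_if_Psi_gt:
  assumes t: "0 < t" "ereal t < conv_radius w" and lam: "lam \<ge> 0" and gt: "ennreal lam < Psi w t"
  shows "lam * gf w t < gf1 w t"
proof -
  have s: "summable (\<lambda>k. w k * t ^ k)" "summable (\<lambda>k. real k * w k * t ^ k)"
    using summable_gf[of t] summable_gf1[of t] t by auto
  then have "lam < gf1 w t / gf w t" using Psi_eq_gf[of t] t lam gt by (simp add: ennreal_less_iff)
  then show ?thesis using gf_pos[of t] s t by (simp add: pos_less_divide_eq)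
qed

lemma psi_le_if_Psi_le:
  assumes t: "0 < t" "ereal t < conv_radius w" and lam: "lam \<ge> 0" and le: "Psi w t \<le> ennreal lam"
  shows "gf1 w t / gf w t \<le> lam"
proof -
  have "summable (\<lambda>k. w k * t ^ k)" "summable (\<lambda>k. real k * w k * t ^ k)"
    using summable_gf[of t] summable_gf1[of t] t by auto
  then show ?thesis using Psi_eq_gf[of t] t lam le by simp
qed

text \<open>The hypothesis \<open>\<lambda> \<le> \<nu>\<close> leaves three cases: \<open>\<Psi>\<close> exceeds \<open>\<lambda>\<close> strictly inside the disc of
  convergence; \<open>\<Psi>(\<rho>) = \<lambda>\<close> with \<open>\<Phi>(\<rho>)\<close> and \<open>\<Phi>'(\<rho>)\<close> finite; or the support of \<open>w\<close> lies in
  \<open>[0, \<lambda>]\<close>, which is what \<open>\<Psi> \<le> \<lambda>\<close> on an infinite radius of convergence forces.\<close>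

lemma nu_cases_infinite_radius:
  assumes inf: "conv_radius w = \<infinity>" and lam: "lam \<ge> 0"
  shows "(\<exists>t1 t0. 0 < t1 \<and> t1 < t0 \<and> ereal t0 < conv_radius w \<and> lam * gf w t1 < gf1 w t1)
    \<or> (\<forall>k. w k > 0 \<longrightarrow> real k \<le> lam)"
proof (cases "ennreal lam < (SUP x\<in>{0<..}. Psi w x)")
  case True
  then obtain t where t: "t > 0" "ennreal lam < Psi w t" by (auto simp: less_SUP_iff)
  then have "lam * gf w t < gf1 w t" using gf_lt_gf1_if_Psi_gt inf lam by simp
  then show ?thesis using t inf by (intro disjI1 exI[of _ t] exI[of _ "t+1"]) auto
next
  case False
  then have "Psi w s \<le> ennreal lam" if "0 < s" for s using that by (auto simp: not_less SUP_le_iff)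
  then have "gf1 w s / gf w s \<le> lam" if "1 \<le> s" for s
    using psi_le_if_Psi_le[of s] inf lam that by simp
  moreover have "summable (\<lambda>k. w k * s ^ k) \<and> summable (\<lambda>k. real k * w k * s ^ k)" if "0 < s" for s
    using summable_gf[of s] summable_gf1[of s] inf that by auto
  ultimately show ?thesis using support_le_if_psi_le lam by blast
qed

lemma nu_cases_at_radius:
  assumes R: "R > 0" "conv_radius w = ereal R" and fin: "Phi w R < \<infinity>"
    and lam: "lam \<ge> 0" and le: "ennreal lam \<le> Psi w R"
  shows "(\<exists>t1 t0. 0 < t1 \<and> t1 < t0 \<and> ereal t0 < conv_radius w \<and> lam * gf w t1 < gf1 w t1)
    \<or> (\<exists>r. 0 < r \<and> conv_radius w = ereal r \<and> summable (\<lambda>k. w k * r ^ k) \<and>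
          summable (\<lambda>k. real k * w k * r ^ k) \<and> gf1 w r = lam * gf w r)"
proof -
  have sR: "summable (\<lambda>k. w k * R ^ k)"
    using fin w_nonneg R by (intro summable_suminf_not_top) (auto simp: Phi_def infinity_ennreal_def)
  have gfR: "gf w R > 0" using gf_pos[of R] R sR by auto
  define S1 where "S1 = (\<Sum>k. ennreal (real k * w k * R ^ k))"
  have PsiR: "Psi w R = S1 / ennreal (gf w R)"
    using Phi_eq_gf[of R] R sR by (simp add: Psi_def S1_def)
  show ?thesis
  proof (cases "ennreal lam < Psi w R")
    case True
    have "ennreal (lam * gf w R) < S1"
    proof (cases "S1 = top")
      case False
      then obtain s1 where s1: "S1 = ennreal s1" "s1 \<ge> 0" by (cases S1) auto
      then have "lam < s1 / gf w R" using True PsiR gfR lam by (simp add: divide_ennreal ennreal_less_iff)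
      then show ?thesis using s1 lam gfR by (simp add: ennreal_less_iff pos_less_divide_eq)
    qed simp
    then obtain K where "ennreal (lam * gf w R) < (\<Sum>k<K. ennreal (real k * w k * R ^ k))"
      unfolding S1_def suminf_eq_SUP less_SUP_iff by auto
    moreover have "(\<Sum>k<K. ennreal (real k * w k * R ^ k)) = ennreal (\<Sum>k<K. real k * w k * R ^ k)"
      using w_nonneg R by (intro sum_ennreal) auto
    ultimately have "lam * gf w R < (\<Sum>k<K. real k * w k * R ^ k)"
      using lam gfR by (simp add: ennreal_less_iff)
    from exists_psi_gt_below[OF R(1) _ sR lam this] obtain u where "0 < u" "u < R" "lam * gf w u < gf1 w u"
      using R by auto
    then show ?thesis using R by (intro disjI1 exI[of _ u] exI[of _ "(u+R)/2"]) auto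
  next
    case False
    then have eq: "Psi w R = ennreal lam" using le by auto
    then have "S1 \<noteq> top" using PsiR by (auto simp: ennreal_top_divide)
    then have sR1: "summable (\<lambda>k. real k * w k * R ^ k)"
      using w_nonneg R by (intro summable_suminf_not_top) (auto simp: S1_def)
    have "gf1 w R / gf w R = lam"
      using eq Psi_eq_gf[of R] sR sR1 R gf1_nonneg[of R] gfR lam by simp
    then have "gf1 w R = lam * gf w R" using gfR by (simp add: field_simps)
    then show ?thesis using R sR sR1 by (intro disjI2 exI[of _ R]) auto
  qed
qed

lemma nu_cases:
  assumes lam: "lam > 0" and le: "ennreal lam \<le> nu w"
  shows "(\<exists>t1 t0. 0 < t1 \<and> t1 < t0 \<and> ereal t0 < conv_radius w \<and> lam * gf w t1 < gf1 w t1)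
    \<or> (\<exists>r. 0 < r \<and> conv_radius w = ereal r \<and> summable (\<lambda>k. w k * r ^ k) \<and>
          summable (\<lambda>k. real k * w k * r ^ k) \<and> gf1 w r = lam * gf w r)
    \<or> (\<forall>k. w k > 0 \<longrightarrow> real k \<le> lam)"
proof -
  consider (inf) "conv_radius w = \<infinity>" | (zero) "conv_radius w = 0"
    | (fin) R where "conv_radius w = ereal R" "R > 0"
  proof (cases "conv_radius w")
    case (real R)
    then show thesis using that conv_radius_nonneg[of w] by (cases "R = 0") (auto simp: zero_ereal_def)
  qed (use that conv_radius_nonneg[of w] in auto)
  then show ?thesis
  proof cases
    case inf
    then show ?thesis using nu_cases_infinite_radius lam le by auto
  next
    case zero
    have z: "real k * w k * 0 ^ k = 0" for k :: nat by (cases k) auto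
    have "Phi w 0 = (\<Sum>k\<in>{0}. ennreal (w k * 0 ^ k))" unfolding Phi_def
      by (rule suminf_finite) (auto simp: power_0_left)
    moreover have "(\<Sum>k. ennreal (real k * w k * 0 ^ k)) = 0"
      by (simp add: z)
    ultimately have "nu w = 0" using zero by (simp add: nu_def Psi_def zero_ereal_def)
    then show ?thesis using le lam by simp
  next
    case fin
    have rho: "ereal s < conv_radius w" if "0 < s" "s < R" for s using fin that by simp
    show ?thesis
    proof (cases "Phi w R < \<infinity>")
      case True
      then have "ennreal lam \<le> Psi w R" using le fin by (simp add: nu_def)
      with nu_cases_at_radius[OF fin(2,1) True, of lam] lam show ?thesis by auto
    next
      case False
      show ?thesis
      proof (cases "\<exists>t\<in>{0<..<R}. ennreal lam < Psi w t")
        case True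
        then obtain t where t: "0 < t" "t < R" "ennreal lam < Psi w t" by auto
        then have "lam * gf w t < gf1 w t" using gf_lt_gf1_if_Psi_gt rho lam by simp
        then show ?thesis using t fin by (intro disjI1 exI[of _ t] exI[of _ "(t+R)/2"]) auto
      next
        case False
        then have "gf1 w s / gf w s \<le> lam" if "0 < s" "s < R" for s
          using psi_le_if_Psi_le[of s] rho[OF that] that lam by (auto simp: not_less)
        then have "Phi w R < \<infinity>" using Phi_finite_if_psi_le[OF fin(2) rho, of lam] lam by simp
        with \<open>\<not> Phi w R < \<infinity>\<close> show ?thesis by simp
      qed
    qed
  qed
qed

end

section \<open>Truncation and the lattice of the support\<close>

definition trunc :: "(nat \<Rightarrow> real) \<Rightarrow> nat \<Rightarrow> nat \<Rightarrow> real" where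
  "trunc w K k = (if k < K then w k else 0)"

lemma gf_trunc: "gf (trunc w K) t = (\<Sum>k<K. w k * t ^ k)"
  unfolding gf_def by (subst suminf_finite[of "{..<K}"]) (auto simp: trunc_def)

lemma gf1_trunc: "gf1 (trunc w K) t = (\<Sum>k<K. real k * w k * t ^ k)"
  unfolding gf1_def by (subst suminf_finite[of "{..<K}"]) (auto simp: trunc_def)

lemma gf_trunc_tendsto: assumes "summable (\<lambda>k. w k * t ^ k)" shows "(\<lambda>K. gf (trunc w K) t) \<longlonglongrightarrow> gf w t"
proof -
  have "(\<lambda>K. \<Sum>k<K. w k * t ^ k) \<longlonglongrightarrow> gf w t" unfolding gf_def by (rule summable_LIMSEQ[OF assms])
  then show ?thesis by (simp add: gf_trunc)
qed

lemma gf1_trunc_tendsto: assumes "summable (\<lambda>k. real k * w k * t ^ k)" shows "(\<lambda>K. gf1 (trunc w K) t) \<longlonglongrightarrow> gf1 w t"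
proof -
  have "(\<lambda>K. \<Sum>k<K. real k * w k * t ^ k) \<longlonglongrightarrow> gf1 w t" unfolding gf1_def by (rule summable_LIMSEQ[OF assms])
  then show ?thesis by (simp add: gf1_trunc)
qed

lemma tail_sum_le:
  fixes w :: "nat \<Rightarrow> real"
  assumes w0: "\<And>k. w k \<ge> 0" and u: "0 < u" "u < s" and ss: "summable (\<lambda>k. w k * s ^ k)"
  shows "(\<Sum>k\<in>{k\<in>{..m}. e < real k}. w k * u ^ k) \<le> gf w s * (u / s) powr e"
proof -
  have s0: "s > 0" using u by simp
  have "(\<Sum>k\<in>{k\<in>{..m}. e < real k}. w k * u ^ k) \<le> (\<Sum>k\<in>{k\<in>{..m}. e < real k}. w k * s ^ k * (u / s) powr e)"
  proof (intro sum_mono)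
    fix k assume k: "k \<in> {k\<in>{..m}. e < real k}"
    have "u ^ k = s ^ k * (u / s) powr real k" using u s0 by (simp add: powr_realpow power_divide)
    also have "\<dots> \<le> s ^ k * (u / s) powr e" using k u s0 by (intro mult_left_mono powr_mono') auto
    finally have "u ^ k \<le> s ^ k * (u / s) powr e" .
    then have "w k * u ^ k \<le> w k * (s ^ k * (u / s) powr e)" using w0 by (intro mult_left_mono) auto
    then show "w k * u ^ k \<le> w k * s ^ k * (u / s) powr e" by (simp add: mult.assoc)
  qed
  also have "\<dots> = (\<Sum>k\<in>{k\<in>{..m}. e < real k}. w k * s ^ k) * (u / s) powr e"
    by (simp add: sum_distrib_right)
  also have "(\<Sum>k\<in>{k\<in>{..m}. e < real k}. w k * s ^ k) \<le> gf w s" unfolding gf_def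
    using ss w0 s0 by (intro sum_le_suminf) auto
  then have "(\<Sum>k\<in>{k\<in>{..m}. e < real k}. w k * s ^ k) * (u / s) powr e \<le> gf w s * (u / s) powr e"
    by (intro mult_right_mono) auto
  finally show ?thesis .
qed

lemma gf_trunc_tail_mono:
  fixes w :: "nat \<Rightarrow> real"
  assumes w0: "\<And>k. w k \<ge> 0" and t: "0 \<le> t" "t \<le> t1" and s1: "summable (\<lambda>k. w k * t1 ^ k)"
    and s: "summable (\<lambda>k. w k * t ^ k)"
  shows "gf w t - gf (trunc w K) t \<le> gf w t1 - gf (trunc w K) t1"
proof -
  have f: "summable (\<lambda>k. trunc w K k * x ^ k)" for x
    by (rule summable_finite_support[of K]) (simp add: trunc_def)
  have "gf w t - gf (trunc w K) t = (\<Sum>k. w k * t ^ k - trunc w K k * t ^ k)"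
    unfolding gf_def by (rule suminf_diff[OF s f])
  also have "\<dots> \<le> (\<Sum>k. w k * t1 ^ k - trunc w K k * t1 ^ k)"
  proof (rule suminf_le)
    fix k show "w k * t ^ k - trunc w K k * t ^ k \<le> w k * t1 ^ k - trunc w K k * t1 ^ k"
      using w0[of k] t by (auto simp: trunc_def intro!: mult_left_mono power_mono)
  qed (intro summable_diff s s1 f)+
  also have "\<dots> = gf w t1 - gf (trunc w K) t1"
    unfolding gf_def by (rule suminf_diff[OF s1 f, symmetric])
  finally show ?thesis .
qed

context weight_seq begin

lemma finite_weight_trunc: "K \<ge> 1 \<Longrightarrow> finite_weight (trunc w K) K"
  by unfold_locales (auto simp: trunc_def w_nonneg w_pos0)

text \<open>The lattice structure of the support: with \<open>d\<close> the gcd of the support, every large multiple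
  of \<open>d\<close> can be spread over boxes using a finite set \<open>A\<close> of support points, uniformly in the number
  of boxes as long as the largest point \<open>M \<in> A\<close> allows it; \<open>c\<close> bounds the weights used from below.\<close>

lemma fill_structure:
  assumes ks: "w ks > 0" "real ks > lam" and lam: "lam \<ge> 0"
  shows "\<exists>M d N0 C A c. real M > lam \<and> (\<forall>k. w k \<noteq> 0 \<longrightarrow> d dvd k) \<and>
    (\<forall>X j. N0 \<le> X \<longrightarrow> d dvd X \<longrightarrow> X + C * M \<le> j * M \<longrightarrow> fill A j X) \<and>
    c > 0 \<and> c \<le> w 0 \<and> (\<forall>a\<in>A. c \<le> w a)"
proof -
  define Sp where "Sp = {k. 0 < k \<and> 0 < w k}"
  have ksS: "ks \<in> Sp" using ks lam by (auto simp: Sp_def)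
  obtain F where F: "finite F" "F \<noteq> {}" "F \<subseteq> Sp" and dvS: "\<And>s. s \<in> Sp \<Longrightarrow> Gcd F dvd s"
    using finite_subset_Gcd_dvd[OF ksS] by (auto simp: Sp_def)
  define d where "d = Gcd F"
  have F0: "0 \<notin> F" using F by (auto simp: Sp_def)
  then have "\<not> F \<subseteq> {0}" using F by auto
  then have d0: "d > 0" unfolding d_def by (metis Gcd_0_iff gr0I)
  have dvall: "\<forall>k. w k \<noteq> 0 \<longrightarrow> d dvd k"
  proof (intro allI impI)
    fix k assume "w k \<noteq> 0"
    then have "k = 0 \<or> k \<in> Sp" using w_nonneg[of k] by (auto simp: Sp_def)
    then show "d dvd k" using dvS by (auto simp: d_def)
  qed
  define A where "A = insert ks F"
  have fA: "finite A" and AS: "A \<subseteq> Sp" and FA: "F \<subseteq> A" using F ksS by (auto simp: A_def)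
  define M where "M = Max A"
  have MA: "M \<in> A" unfolding M_def by (rule Max_in[OF fA]) (simp add: A_def)
  have Mks: "ks \<le> M" using fA by (simp add: M_def A_def)
  have dvA: "\<And>a. a \<in> A \<Longrightarrow> d dvd a" using AS dvS by (auto simp: d_def)
  obtain P Q j1 j2 where PQ: "fill F j1 P" "fill F j2 Q" "P = Q + d"
    using fill_bezout[OF F(1,2) F0] by (auto simp: d_def)
  obtain N0 where N0: "\<forall>x\<ge>N0. d dvd x \<longrightarrow> (\<exists>j. fill A j x)"
    using fill_large_multiples[OF fill_subset[OF PQ(1) FA] fill_subset[OF PQ(2) FA] PQ(3) d0 dvA] by blast
  obtain C where "\<forall>X j. N0 \<le> X \<longrightarrow> d dvd X \<longrightarrow> X + C * M \<le> j * M \<longrightarrow> fill A j X"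
    using fill_uniform[of N0 d A M] N0 MA dvA[OF MA] Mks ks lam by fastforce
  moreover define c where "c = Min (w ` insert 0 A)"
  moreover have "c \<in> w ` insert 0 A" unfolding c_def by (rule Min_in) (use fA in auto)
  then have "c > 0" using AS w_pos0 by (auto simp: Sp_def)
  moreover have "c \<le> w a" if "a \<in> insert 0 A" for a unfolding c_def by (rule Min_le) (use fA that in auto)
  ultimately show ?thesis using Mks ks dvall by (intro exI[of _ M] exI[of _ d] exI[of _ N0] exI[of _ C] exI[of _ A] exI[of _ c]) auto
qed

lemma exists_trunc_psi_gt:
  assumes s: "summable (\<lambda>k. w k * t ^ k)" "summable (\<lambda>k. real k * w k * t ^ k)"
    and big: "lam * gf w t < gf1 w t" and b: "b > 0"
  obtains K where "1 \<le> K" "lam * gf (trunc w K) t < gf1 (trunc w K) t" "gf w t - gf (trunc w K) t < b"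
proof -
  have "(\<lambda>K. gf1 (trunc w K) t - lam * gf (trunc w K) t) \<longlonglongrightarrow> gf1 w t - lam * gf w t"
    by (intro tendsto_intros gf1_trunc_tendsto gf_trunc_tendsto s)
  then have "\<forall>\<^sub>F K in sequentially. 0 < gf1 (trunc w K) t - lam * gf (trunc w K) t"
    using big by (intro order_tendstoD(1)) auto
  moreover have "(\<lambda>K. gf w t - gf (trunc w K) t) \<longlonglongrightarrow> gf w t - gf w t"
    by (intro tendsto_intros gf_trunc_tendsto s)
  then have "\<forall>\<^sub>F K in sequentially. gf w t - gf (trunc w K) t < b"
    using b by (intro order_tendstoD(2)) auto
  ultimately have "\<forall>\<^sub>F K in sequentially. 1 \<le> K \<and> 0 < gf1 (trunc w K) t - lam * gf (trunc w K) t \<and>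
      gf w t - gf (trunc w K) t < b"
    by (intro eventually_conj eventually_ge_at_top)
  then show ?thesis using that unfolding eventually_sequentially by auto
qed

lemma exists_trunc_psi_near:
  assumes s: "summable (\<lambda>k. w k * r ^ k)" "summable (\<lambda>k. real k * w k * r ^ k)"
    and pos: "gf w r > 0" and eq: "gf1 w r = lam * gf w r" and a: "a > 0" and b: "b > 0"
  obtains K where "1 \<le> K" "\<bar>gf1 (trunc w K) r / gf (trunc w K) r - lam\<bar> < a"
    "ln (gf w r) - ln (gf (trunc w K) r) < b"
proof -
  have "(\<lambda>K. gf1 (trunc w K) r / gf (trunc w K) r) \<longlonglongrightarrow> gf1 w r / gf w r"
    using pos by (intro tendsto_divide gf1_trunc_tendsto gf_trunc_tendsto s) auto
  then have "(\<lambda>K. gf1 (trunc w K) r / gf (trunc w K) r) \<longlonglongrightarrow> lam" using eq pos by simp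
  from tendstoD[OF this a]
  have "\<forall>\<^sub>F K in sequentially. \<bar>gf1 (trunc w K) r / gf (trunc w K) r - lam\<bar> < a"
    by (simp add: dist_real_def)
  moreover have "(\<lambda>K. ln (gf w r) - ln (gf (trunc w K) r)) \<longlonglongrightarrow> ln (gf w r) - ln (gf w r)"
    using pos by (intro tendsto_intros gf_trunc_tendsto s) auto
  then have "\<forall>\<^sub>F K in sequentially. ln (gf w r) - ln (gf (trunc w K) r) < b"
    using b by (intro order_tendstoD(2)) auto
  ultimately have "\<forall>\<^sub>F K in sequentially. 1 \<le> K \<and> \<bar>gf1 (trunc w K) r / gf (trunc w K) r - lam\<bar> < a \<and>
      ln (gf w r) - ln (gf (trunc w K) r) < b"
    by (intro eventually_conj eventually_ge_at_top)
  then show ?thesis using that unfolding eventually_sequentially by auto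
qed

lemma exists_support_gt:
  assumes "0 < t" "summable (\<lambda>k. w k * t ^ k)" "summable (\<lambda>k. real k * w k * t ^ k)"
    and "lam * gf w t \<le> gf1 w t" and lam: "lam > 0"
  shows "\<exists>ks. w ks > 0 \<and> real ks > lam"
proof (rule ccontr)
  assume "\<not> ?thesis"
  then have le: "w k > 0 \<Longrightarrow> real k \<le> lam" for k by force
  have t: "\<And>k. real k * w k * t ^ k \<le> lam * (w k * t ^ k)"
  proof -
    fix k show "real k * w k * t ^ k \<le> lam * (w k * t ^ k)"
    proof (cases "w k > 0")
      case True then show ?thesis using le[OF True] assms(1) by (simp add: mult_right_mono mult.assoc)
    next
      case False then have "w k = 0" using w_nonneg[of k] by simp
      then show ?thesis by simp
    qed
  qed
  have "gf w t * lam - gf1 w t = (\<Sum>k. lam * (w k * t ^ k) - real k * w k * t ^ k)"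
    unfolding gf_def gf1_def using assms(2,3)
    by (simp add: suminf_diff[symmetric] suminf_mult summable_mult mult.commute)
  also have "\<dots> \<ge> (\<Sum>k\<in>{0}. lam * (w k * t ^ k) - real k * w k * t ^ k)"
    using t assms(2,3) by (intro sum_le_suminf summable_diff summable_mult) (auto simp: algebra_simps)
  finally have "gf w t * lam - gf1 w t \<ge> lam * w 0" by simp
  moreover have "lam * w 0 > 0" using lam w_pos0 by simp
  ultimately show False using assms(4) by (simp add: mult.commute)
qed

lemma lattice_data:
  fixes mm nn :: "nat \<Rightarrow> nat"
  assumes lam: "lam > 0" and t: "0 < t" "summable (\<lambda>k. w k * t ^ k)" "summable (\<lambda>k. real k * w k * t ^ k)"
    and le: "lam * gf w t \<le> gf1 w t" and zp: "\<forall>\<^sub>F j in sequentially. Z w (mm j) (nn j) > 0"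
  shows "\<exists>M d N0 C A c. real M > lam \<and> (\<forall>k. w k \<noteq> 0 \<longrightarrow> d dvd k) \<and>
    (\<forall>X j. N0 \<le> X \<longrightarrow> d dvd X \<longrightarrow> X + C * M \<le> j * M \<longrightarrow> fill A j X) \<and>
    c > 0 \<and> c \<le> w 0 \<and> (\<forall>a\<in>A. c \<le> w a) \<and> (\<forall>\<^sub>F j in sequentially. d dvd mm j)"
proof -
  obtain ks where ks: "w ks > 0" "real ks > lam" using exists_support_gt[OF t le lam] by blast
  obtain M d N0 C A c where M: "real M > lam" and dvd: "\<forall>k. w k \<noteq> 0 \<longrightarrow> d dvd k"
    and rest: "\<forall>X j. N0 \<le> X \<longrightarrow> d dvd X \<longrightarrow> X + C * M \<le> j * M \<longrightarrow> fill A j X"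
      "c > 0" "c \<le> w 0" "\<forall>a\<in>A. c \<le> w a"
    using fill_structure[OF ks less_imp_le[OF lam]] by (elim exE conjE) (rule that)
  have "d dvd x" if "Z w x N > 0" for x N
    by (rule dvd_if_Z_neq_0[of w d x N]) (use dvd that in auto)
  then have "\<forall>\<^sub>F j in sequentially. d dvd mm j"
    using zp by (auto elim: eventually_mono)
  then show ?thesis using M dvd rest by blast
qed

end

lemma exists_small_factor:
  fixes c L :: real assumes "c > 0" "L \<ge> 0"
  obtains \<eta> where "0 < \<eta>" "\<eta> < 1" "\<eta> * L \<le> c"
proof -
  define \<eta> where "\<eta> = min (1/2) (c / (L + 1))"
  have "\<eta> * L \<le> c / (L + 1) * (L + 1)"
    using assms by (intro mult_mono) (auto simp: \<eta>_def)
  then show ?thesis using that[of \<eta>] assms by (simp add: \<eta>_def)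
qed

lemma ln_diff_le: "0 < (a :: real) \<Longrightarrow> 0 < b \<Longrightarrow> ln a - ln b \<le> (a - b) / b"
  using ln_le_minus_one[of "a / b"] by (simp add: ln_div diff_divide_distrib)

lemma tilt_mean_slack:
  fixes \<mu> lam \<eta> m0 M :: real
  assumes "\<bar>\<mu> - lam\<bar> < \<eta> * m0 / 2" "0 < \<eta>" "\<eta> < 1" "m0 \<le> lam" "m0 \<le> M - lam"
  shows "\<bar>lam - \<mu>\<bar> < \<eta> * \<mu>" "\<bar>lam - \<mu>\<bar> < \<eta> * (M - \<mu>)"
proof -
  define e where "e = \<bar>lam - \<mu>\<bar>"
  have e: "e < \<eta> * m0 / 2" "\<eta> * e \<le> e" "lam - e \<le> \<mu>" "M - lam - e \<le> M - \<mu>"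
    using assms by (auto simp: e_def abs_minus_commute mult_left_le_one_le)
  have "\<eta> * (lam - e) \<le> \<eta> * \<mu>" "\<eta> * (M - lam - e) \<le> \<eta> * (M - \<mu>)" "\<eta> * m0 \<le> \<eta> * lam"
    "\<eta> * m0 \<le> \<eta> * (M - lam)"
    using e assms by (intro mult_left_mono; simp)+
  then show "\<bar>lam - \<mu>\<bar> < \<eta> * \<mu>" "\<bar>lam - \<mu>\<bar> < \<eta> * (M - \<mu>)"
    using e unfolding e_def[symmetric] by (simp_all add: algebra_simps)
qed

lemma (in finite_weight) exists_psi_eq:
  assumes lam: "lam > 0" and t1: "t1 > 0" "lam * gf v t1 \<le> gf1 v t1"
  obtains t where "0 < t" "t \<le> t1" "gf1 v t / gf v t = lam"
proof -
  have "continuous_on {0..t1} (\<lambda>s. gf1 v s / gf v s)"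
    using gf_pos continuous_on_gf continuous_on_gf1 by (intro continuous_on_divide) force+
  moreover have "real k * v k * 0 ^ k = 0" for k :: nat by (cases k) auto
  then have "gf1 v 0 = 0" by (simp add: gf1_eq)
  moreover have "lam \<le> gf1 v t1 / gf v t1" using t1 gf_pos[of t1] by (simp add: pos_le_divide_eq)
  ultimately obtain t where "0 \<le> t" "t \<le> t1" "gf1 v t / gf v t = lam"
    using IVT'[of "\<lambda>s. gf1 v s / gf v s" 0 lam t1] lam t1 by auto
  moreover have "t \<noteq> 0" using calculation \<open>gf1 v 0 = 0\<close> lam by auto
  ultimately show ?thesis using that[of t] by simp
qed

context weight_seq begin

text \<open>Case \<open>\<Psi>(t1) > \<lambda>\<close> with \<open>t1 < t0 < \<rho>\<close>: tilt a truncation of \<open>w\<close> to mean exactly \<open>\<lambda>\<close> at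
  some \<open>t \<le> t1\<close>; a box above \<open>\<epsilon> n\<close> then costs a factor \<open>(t/t0)^(\<epsilon> n)\<close>.\<close>

lemma max_small_interior:
  fixes mm nn :: "nat \<Rightarrow> nat"
  assumes lam: "lam > 0" and t: "0 < t1" "t1 < t0" "ereal t0 < conv_radius w"
    and big: "lam * gf w t1 < gf1 w t1"
    and nn: "filterlim nn at_top sequentially"
    and zp: "\<forall>\<^sub>F j in sequentially. Z w (mm j) (nn j) > 0"
    and lim: "(\<lambda>j. real (mm j) / real (nn j)) \<longlonglongrightarrow> lam"
    and eps: "\<epsilon> > 0"
  shows "(\<lambda>j. Pbb w (mm j) (nn j) (\<lambda>y. real (Ymax (nn j) y) > \<epsilon> * real (nn j))) \<longlonglongrightarrow> 0"
proof -
  have t1r: "ereal t1 < conv_radius w" using t by (meson ereal_less_eq(3) less_imp_le order_le_less_trans)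
  have st0: "summable (\<lambda>k. w k * t0 ^ k)" using summable_gf[of t0] t by simp
  have st1: "summable (\<lambda>k. w k * t1 ^ k)" "summable (\<lambda>k. real k * w k * t1 ^ k)"
    using summable_gf[of t1] summable_gf1[of t1] t1r t by simp_all
  obtain M d N0 C A c where M: "real M > lam" and dvd: "\<forall>k. w k \<noteq> 0 \<longrightarrow> d dvd k"
    and fillA: "\<forall>X j. N0 \<le> X \<longrightarrow> d dvd X \<longrightarrow> X + C * M \<le> j * M \<longrightarrow> fill A j X"
    and c: "c > 0" "c \<le> w 0" "\<forall>a\<in>A. c \<le> w a" and dm: "\<forall>\<^sub>F j in sequentially. d dvd mm j"
    using lattice_data[OF lam t(1) st1 less_imp_le[OF big] zp] by (elim exE conjE) (rule that)
  define c0 where "c0 = \<epsilon> * ln (t0 / t1)"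
  have c0: "c0 > 0" using t eps by (simp add: c0_def)
  obtain K where K: "1 \<le> K" "lam * gf (trunc w K) t1 < gf1 (trunc w K) t1"
      "gf w t1 - gf (trunc w K) t1 < w 0 * c0 / 4"
    using exists_trunc_psi_gt[OF st1 big, of "w 0 * c0 / 4"] c0 w_pos0 by auto
  define v where "v = trunc w K"
  interpret v: finite_weight v K unfolding v_def by (rule finite_weight_trunc[OF K(1)])
  have vw: "v k \<le> w k" and vd: "v k \<noteq> 0 \<Longrightarrow> d dvd k" and v0: "v 0 = w 0" for k
    using w_nonneg dvd K(1) by (auto simp: v_def trunc_def split: if_splits)
  obtain t where tt: "0 < t" "t \<le> t1" "gf1 v t / gf v t = lam"
    using v.exists_psi_eq[OF lam t(1)] K(2) by (auto simp: v_def)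
  have "ereal t < conv_radius w" using tt t1r by (meson ereal_less_eq(3) order_le_less_trans)
  then have st: "summable (\<lambda>k. w k * t ^ k)" using summable_gf[of t] tt by simp
  obtain \<eta> where eta: "0 < \<eta>" "\<eta> < 1" "\<eta> * (\<bar>ln c\<bar> + real M * \<bar>ln t\<bar> + \<bar>ln (gf v t)\<bar>) \<le> c0 / 4"
    using exists_small_factor[of "c0 / 4" "\<bar>ln c\<bar> + real M * \<bar>ln t\<bar> + \<bar>ln (gf v t)\<bar>"] c0 by auto
  have lb: "\<forall>\<^sub>F j in sequentially. Z w (mm j) (nn j) * t ^ (mm j) \<ge>
     gf v t ^ (nn j) * exp (- ((\<eta> * (\<bar>ln c\<bar> + real M * \<bar>ln t\<bar> + \<bar>ln (gf v t)\<bar>) + c0 / 4) * real (nn j)))"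
    by (rule v.Z_lower_bound[OF w_nonneg vw vd _ c(1,2) _ tt(1) nn lim dm eta(1,2)])
      (use tt eta M lam c0 fillA c(3) in auto)
  have tail: "\<forall>\<^sub>F j in sequentially. (\<Sum>k\<in>{k\<in>{..mm j}. \<epsilon> * real (nn j) < real k}. w k * t ^ k)
                  \<le> gf w t0 * (t / t0) powr (\<epsilon> * real (nn j))"
    using tail_sum_le[OF w_nonneg tt(1) _ st0] tt t by auto
  have "ln (gf w t) - ln (gf v t) \<le> (gf w t - gf v t) / gf v t"
    using gf_pos[of t] v.gf_pos[of t] st tt by (intro ln_diff_le) auto
  also have "\<dots> \<le> (w 0 * c0 / 4) / w 0"
  proof (intro frac_le)
    have "gf w t - gf v t \<le> gf w t1 - gf v t1"
      unfolding v_def using tt st1 st by (intro gf_trunc_tail_mono[OF w_nonneg]) auto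
    then show "gf w t - gf v t \<le> w 0 * c0 / 4" using K(3) by (simp add: v_def)
  qed (use v.gf_ge_v0[of t] v0 tt w_pos0 c0 in auto)
  finally have h1: "ln (gf w t) - ln (gf v t) \<le> c0 / 4" using w_pos0 by simp
  have "\<epsilon> * ln (t / t0) \<le> \<epsilon> * ln (t1 / t0)" using tt t eps by (intro mult_left_mono) (auto simp: divide_right_mono)
  also have "\<dots> = - c0" using t by (simp add: c0_def ln_div algebra_simps)
  finally have h2: "\<epsilon> * ln (t / t0) \<le> - c0" .
  have "\<forall>\<^sub>F j in sequentially. ln (gf w t) - ln (gf v t) + real (mm j) / real (nn j) * (ln t - ln t)
      + (\<eta> * (\<bar>ln c\<bar> + real M * \<bar>ln t\<bar> + \<bar>ln (gf v t)\<bar>) + c0 / 4) + \<epsilon> * ln (t / t0) \<le> - (c0 / 4)"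
    using h1 h2 eta by simp
  from Pbb_large_max_tendsto_0[OF w_nonneg w_pos0 tt(1) st tt(1) v.gf_pos _ _ nn tail lb this]
  show ?thesis using tt t c0 gf_pos[of t0] st0 by auto
qed

lemma exists_tilt_below_radius:
  assumes lam: "lam > 0" and r: "0 < r" "conv_radius w = ereal r"
    and sr: "summable (\<lambda>k. w k * r ^ k)" and sr1: "summable (\<lambda>k. real k * w k * r ^ k)"
    and eq: "gf1 w r = lam * gf w r" and e: "e > 0"
  obtains u where "0 < u" "u < r" "ln (gf w u) \<le> ln (gf w r) - (lam - e) * (ln r - ln u)"
proof -
  have rho: "ereal s < conv_radius w" if "0 < s" "s < r" for s using r that by simp
  have gfr: "gf w r > 0" using gf_pos[of r] sr r by simp
  define \<theta> where "\<theta> = max (lam - e) (lam / 2)"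
  have th: "\<theta> \<ge> 0" "lam - e \<le> \<theta>" "\<theta> * gf w r < gf1 w r" using lam e gfr eq by (auto simp: \<theta>_def)
  have "(\<lambda>K. \<Sum>k<K. real k * w k * r ^ k) \<longlonglongrightarrow> gf1 w r" unfolding gf1_def by (rule summable_LIMSEQ[OF sr1])
  from order_tendstoD(1)[OF this th(3)] obtain K0 where "\<theta> * gf w r < (\<Sum>k<K0. real k * w k * r ^ k)"
    unfolding eventually_sequentially by blast
  from exists_psi_gt_below[OF r(1) rho sr th(1) this]
  obtain u where u: "0 < u" "u < r" "\<theta> * gf w u < gf1 w u" by blast
  have su: "summable (\<lambda>k. w k * u ^ k)" "summable (\<lambda>k. real k * w k * u ^ k)"
    using summable_gf[of u] summable_gf1[of u] rho[OF u(1,2)] u by simp_all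
  have "gf w u * (r / u) powr (gf1 w u / gf w u) \<le> gf w r"
    using gf_mult_ge[OF u(1) _ su, of "r / u"] u sr by simp
  then have "ln (gf w u) + (gf1 w u / gf w u) * (ln r - ln u) \<le> ln (gf w r)"
    using gf_pos[of u] su gfr u r by (subst (asm) ln_le_cancel_iff[symmetric]) (auto simp: ln_mult ln_div)
  moreover have "lam - e < gf1 w u / gf w u"
    using th(2) u(3) gf_pos[of u] su u by (simp add: pos_less_divide_eq) (smt (verit) mult_right_mono)
  moreover have "ln r - ln u > 0" using u by simp
  ultimately show ?thesis using that u by (smt (verit) mult_strict_right_mono)
qed

text \<open>Case \<open>\<Psi>(\<rho>) = \<lambda>\<close> with \<open>\<Phi>(\<rho>), \<Phi>'(\<rho>)\<close> finite: the lower bound is taken at \<open>\<rho>\<close> itself for a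
  truncation with tilted mean close to \<open>\<lambda>\<close>, the upper bound at a point \<open>u < \<rho>\<close> where \<open>\<Psi>(u)\<close> is
  still close to \<open>\<lambda>\<close>.\<close>

lemma max_small_boundary:
  fixes mm nn :: "nat \<Rightarrow> nat"
  assumes lam: "lam > 0" and r: "0 < r" "conv_radius w = ereal r"
    and sr: "summable (\<lambda>k. w k * r ^ k)" and sr1: "summable (\<lambda>k. real k * w k * r ^ k)"
    and eq: "gf1 w r = lam * gf w r"
    and nn: "filterlim nn at_top sequentially"
    and zp: "\<forall>\<^sub>F j in sequentially. Z w (mm j) (nn j) > 0"
    and lim: "(\<lambda>j. real (mm j) / real (nn j)) \<longlonglongrightarrow> lam"
    and eps: "\<epsilon> > 0"
  shows "(\<lambda>j. Pbb w (mm j) (nn j) (\<lambda>y. real (Ymax (nn j) y) > \<epsilon> * real (nn j))) \<longlonglongrightarrow> 0"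
proof -
  have rho: "ereal s < conv_radius w" if "0 < s" "s < r" for s using r that by simp
  have gfr: "gf w r > 0" using gf_pos[of r] sr r by simp
  obtain M d N0 C A c where M: "real M > lam" and dvd: "\<forall>k. w k \<noteq> 0 \<longrightarrow> d dvd k"
    and fillA: "\<forall>X j. N0 \<le> X \<longrightarrow> d dvd X \<longrightarrow> X + C * M \<le> j * M \<longrightarrow> fill A j X"
    and c: "c > 0" "c \<le> w 0" "\<forall>a\<in>A. c \<le> w a" and dm: "\<forall>\<^sub>F j in sequentially. d dvd mm j"
    using lattice_data[OF lam r(1) sr sr1 eq_refl[OF eq[symmetric]] zp] by (elim exE conjE) (rule that)
  obtain u where u: "0 < u" "u < r" and J: "ln (gf w u) \<le> ln (gf w r) - (lam - \<epsilon> / 4) * (ln r - ln u)"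
    using exists_tilt_below_radius[OF lam r sr sr1 eq, of "\<epsilon> / 4"] eps by auto
  have su: "summable (\<lambda>k. w k * u ^ k)" "summable (\<lambda>k. real k * w k * u ^ k)"
    using summable_gf[of u] summable_gf1[of u] rho[OF u(1,2)] u by simp_all
  define L where "L = ln r - ln u"
  have L: "L > 0" using u by (simp add: L_def)
  define Lmax where "Lmax = \<bar>ln c\<bar> + real M * \<bar>ln r\<bar> + \<bar>ln (w 0)\<bar> + \<bar>ln (gf w r)\<bar>"
  obtain \<eta> where eta: "0 < \<eta>" "\<eta> < 1" "\<eta> * Lmax \<le> \<epsilon> * L / 8"
    using exists_small_factor[of "\<epsilon> * L / 8" Lmax] eps L by (auto simp: Lmax_def)
  define m0 where "m0 = min lam (real M - lam)"
  have m0: "m0 > 0" "m0 \<le> lam" "m0 \<le> real M - lam" using lam M by (auto simp: m0_def)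
  obtain K where K: "1 \<le> K" "\<bar>gf1 (trunc w K) r / gf (trunc w K) r - lam\<bar> < \<eta> * m0 / 2"
      "ln (gf w r) - ln (gf (trunc w K) r) < \<epsilon> * L / 8"
    using exists_trunc_psi_near[OF sr sr1 gfr eq, of "\<eta> * m0 / 2" "\<epsilon> * L / 8"] eta m0 eps L by auto
  define v where "v = trunc w K"
  interpret v: finite_weight v K unfolding v_def by (rule finite_weight_trunc[OF K(1)])
  have vw: "v k \<le> w k" and vd: "v k \<noteq> 0 \<Longrightarrow> d dvd k" and v0: "v 0 = w 0" for k
    using w_nonneg dvd K(1) by (auto simp: v_def trunc_def split: if_splits)
  have "\<bar>ln (gf v r)\<bar> \<le> \<bar>ln (w 0)\<bar> + \<bar>ln (gf w r)\<bar>"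
  proof -
    have "gf v r \<le> gf w r"
      unfolding v_def gf_trunc using sum_le_suminf[OF sr, of "{..<K}"] w_nonneg r by (simp add: gf_def)
    moreover have "w 0 \<le> gf v r" using v.gf_ge_v0[of r] v0 r by simp
    ultimately have "ln (w 0) \<le> ln (gf v r)" "ln (gf v r) \<le> ln (gf w r)" using w_pos0 by simp_all
    then show ?thesis by linarith
  qed
  then have etaL: "\<eta> * (\<bar>ln c\<bar> + real M * \<bar>ln r\<bar> + \<bar>ln (gf v r)\<bar>) \<le> \<epsilon> * L / 8"
    using eta by (smt (verit) Lmax_def mult_left_mono)
  note mu = tilt_mean_slack[OF K(2)[folded v_def] eta(1,2) m0(2,3)]
  have lb: "\<forall>\<^sub>F j in sequentially. Z w (mm j) (nn j) * r ^ (mm j) \<ge>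
     gf v r ^ (nn j) * exp (- ((\<eta> * (\<bar>ln c\<bar> + real M * \<bar>ln r\<bar> + \<bar>ln (gf v r)\<bar>) + \<epsilon> * L / 8) * real (nn j)))"
    by (rule v.Z_lower_bound[OF w_nonneg vw vd _ c(1,2) _ r(1) nn lim dm eta(1,2) mu])
      (use eps L fillA c(3) in auto)
  have tail: "\<forall>\<^sub>F j in sequentially. (\<Sum>k\<in>{k\<in>{..mm j}. \<epsilon> * real (nn j) < real k}. w k * u ^ k)
                  \<le> gf w r * (u / r) powr (\<epsilon> * real (nn j))"
    using tail_sum_le[OF w_nonneg u(1,2) sr] by auto
  have "\<forall>\<^sub>F j in sequentially. real (mm j) / real (nn j) < lam + \<epsilon> / 4"
    using order_tendstoD(2)[OF lim, of "lam + \<epsilon> / 4"] eps by simp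
  then have "\<forall>\<^sub>F j in sequentially. ln (gf w u) - ln (gf v r) + real (mm j) / real (nn j) * (ln r - ln u)
      + (\<eta> * (\<bar>ln c\<bar> + real M * \<bar>ln r\<bar> + \<bar>ln (gf v r)\<bar>) + \<epsilon> * L / 8) + \<epsilon> * ln (u / r) \<le> - (\<epsilon> * L / 8)"
  proof (rule eventually_mono)
    fix j assume "real (mm j) / real (nn j) < lam + \<epsilon> / 4"
    then have "real (mm j) / real (nn j) * L \<le> (lam + \<epsilon> / 4) * L" using L by (intro mult_right_mono) auto
    moreover have "\<epsilon> * ln (u / r) = - (\<epsilon> * L)" using u r by (simp add: ln_div L_def algebra_simps)
    ultimately show "ln (gf w u) - ln (gf v r) + real (mm j) / real (nn j) * (ln r - ln u)
      + (\<eta> * (\<bar>ln c\<bar> + real M * \<bar>ln r\<bar> + \<bar>ln (gf v r)\<bar>) + \<epsilon> * L / 8) + \<epsilon> * ln (u / r) \<le> - (\<epsilon> * L / 8)"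
      using J K(3) etaL unfolding L_def[symmetric] v_def[symmetric]
      by (simp add: algebra_simps)
  qed
  from Pbb_large_max_tendsto_0[OF w_nonneg w_pos0 u(1) su(1) r(1) v.gf_pos _ _ nn tail lb this]
  show ?thesis using u r gfr eps L by auto
qed

end

lemma Ymax_in: assumes "n \<ge> 1" shows "Ymax n y \<in> y ` {..<n}"
proof -
  have "0 \<in> {..<n}" using assms by simp
  then show ?thesis unfolding Ymax_def by (intro Max_in) auto
qed

lemma Ymax_le: assumes "y \<in> boxes m n" "n \<ge> 1" shows "Ymax n y \<le> m"
proof -
  obtain i where "i < n" "Ymax n y = y i" using Ymax_in[OF assms(2)] by auto
  moreover have "y i \<le> (\<Sum>i<n. y i)" using \<open>i < n\<close> by (intro member_le_sum) auto
  ultimately show ?thesis using assms(1) by (simp add: boxes_def)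
qed

lemma Pbb_eq_0:
  assumes "\<And>y. y \<in> boxes m n \<Longrightarrow> wt w n y \<noteq> 0 \<Longrightarrow> real (Ymax n y) \<le> e"
  shows "Pbb w m n (\<lambda>y. real (Ymax n y) > e) = 0"
proof -
  have "(\<Sum>y\<in>{y\<in>boxes m n. e < real (Ymax n y)}. wt w n y) = 0"
    using assms by (intro sum.neutral) (auto simp: not_le[symmetric])
  then show ?thesis by (simp add: Pbb_def)
qed

lemma max_small_lam_0:
  fixes mm nn :: "nat \<Rightarrow> nat"
  assumes nn: "filterlim nn at_top sequentially"
    and lim: "(\<lambda>j. real (mm j) / real (nn j)) \<longlonglongrightarrow> 0" and eps: "\<epsilon> > 0"
  shows "(\<lambda>j. Pbb w (mm j) (nn j) (\<lambda>y. real (Ymax (nn j) y) > \<epsilon> * real (nn j))) \<longlonglongrightarrow> 0"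
proof (rule tendsto_eventually)
  have "\<forall>\<^sub>F j in sequentially. 1 \<le> nn j" using nn by (simp add: filterlim_at_top)
  moreover have "\<forall>\<^sub>F j in sequentially. real (mm j) / real (nn j) < \<epsilon>"
    using order_tendstoD(2)[OF lim eps] .
  ultimately show "\<forall>\<^sub>F j in sequentially. Pbb w (mm j) (nn j) (\<lambda>y. real (Ymax (nn j) y) > \<epsilon> * real (nn j)) = 0"
  proof eventually_elim
    case (elim j)
    then have "real (mm j) \<le> \<epsilon> * real (nn j)" by (simp add: divide_less_eq less_imp_le)
    then show ?case using Ymax_le[of _ "mm j" "nn j"] elim by (intro Pbb_eq_0) (force simp: of_nat_le_iff)
  qed
qed

lemma max_small_bounded_support:
  fixes mm nn :: "nat \<Rightarrow> nat"
  assumes nn: "filterlim nn at_top sequentially"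
    and supp: "\<And>k. w k > 0 \<Longrightarrow> real k \<le> lam" and w0: "\<And>k. w k \<ge> 0" and eps: "\<epsilon> > 0"
  shows "(\<lambda>j. Pbb w (mm j) (nn j) (\<lambda>y. real (Ymax (nn j) y) > \<epsilon> * real (nn j))) \<longlonglongrightarrow> 0"
proof (rule tendsto_eventually)
  have "filterlim (\<lambda>j. real (nn j)) at_top sequentially"
    by (rule filterlim_compose[OF filterlim_real_sequentially nn])
  then have "\<forall>\<^sub>F j in sequentially. max 1 (lam / \<epsilon>) \<le> real (nn j)" unfolding filterlim_at_top by blast
  then show "\<forall>\<^sub>F j in sequentially. Pbb w (mm j) (nn j) (\<lambda>y. real (Ymax (nn j) y) > \<epsilon> * real (nn j)) = 0"
  proof eventually_elim
    case (elim j)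
    then have n: "nn j \<ge> 1" "lam \<le> \<epsilon> * real (nn j)" using eps by (auto simp: divide_le_eq mult.commute)
    show ?case
    proof (intro Pbb_eq_0)
      fix y assume "wt w (nn j) y \<noteq> 0"
      then have "w (y i) > 0" if "i < nn j" for i
        using that w0[of "y i"] by (auto simp: wt_def prod_zero_iff order_less_le)
      then show "real (Ymax (nn j) y) \<le> \<epsilon> * real (nn j)" using Ymax_in[OF n(1), of y] supp n(2) by force
    qed
  qed
qed

context weight_seq begin

lemma max_small:
  fixes mm nn :: "nat \<Rightarrow> nat"
  assumes lam: "lam \<ge> 0" "ennreal lam \<le> nu w"
    and nn: "filterlim nn at_top sequentially"
    and zp: "\<forall>\<^sub>F j in sequentially. Z w (mm j) (nn j) > 0"
    and lim: "(\<lambda>j. real (mm j) / real (nn j)) \<longlonglongrightarrow> lam"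
    and eps: "\<epsilon> > 0"
  shows "(\<lambda>j. Pbb w (mm j) (nn j) (\<lambda>y. real (Ymax (nn j) y) > \<epsilon> * real (nn j))) \<longlonglongrightarrow> 0"
proof (cases "lam = 0")
  case True
  then show ?thesis using max_small_lam_0[OF nn _ eps] lim by simp
next
  case False
  with lam have "lam > 0" by simp
  from nu_cases[OF this lam(2)] show ?thesis
  proof (elim disjE exE conjE)
    fix t1 t0 assume "0 < t1" "t1 < t0" "ereal t0 < conv_radius w" "lam * gf w t1 < gf1 w t1"
    then show ?thesis using max_small_interior \<open>lam > 0\<close> nn zp lim eps by blast
  next
    fix r assume "0 < r" "conv_radius w = ereal r" "summable (\<lambda>k. w k * r ^ k)"
      "summable (\<lambda>k. real k * w k * r ^ k)" "gf1 w r = lam * gf w r"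
    then show ?thesis using max_small_boundary \<open>lam > 0\<close> nn zp lim eps by blast
  next
    assume "\<forall>k. w k > 0 \<longrightarrow> real k \<le> lam"
    then show ?thesis by (intro max_small_bounded_support[OF nn _ w_nonneg eps]) auto
  qed
qed

end

theorem theorem18p2:
  fixes w :: "nat \<Rightarrow> real" and mm nn :: "nat \<Rightarrow> nat" and lam :: real
  assumes "\<forall>k. w k \<ge> 0" and "w 0 > 0" and "\<exists>k\<ge>1. w k > 0"
    and "filterlim nn at_top sequentially"
    and "eventually (\<lambda>j. Z w (mm j) (nn j) > 0) sequentially"
    and "(\<lambda>j. real (mm j) / real (nn j)) \<longlonglongrightarrow> lam"
    and "0 \<le> lam"
    and "ennreal lam \<le> nu w"
  shows "\<forall>\<epsilon>>0. (\<lambda>j. Pbb w (mm j) (nn j)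
            (\<lambda>y. real (Ymax (nn j) y) > \<epsilon> * real (nn j))) \<longlonglongrightarrow> 0"
proof -
  \<comment> \<open>The hypothesis \<open>\<exists>k\<ge>1. w k > 0\<close> only excludes the trivial weight; the proof does not need it.\<close>
  interpret weight_seq w using assms(1,2) by unfold_locales auto
  show ?thesis using max_small assms(4-8) by blast
qed

end
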